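(* Let $(\Omega,\mathcal{F},\mathbb{P})$ be a probability space and $Y_1,\dots,Y_T$ random vectors in $\mathbb{R}^{n_y}$ with $\mathbb{E}[\|Y_i\|_2^k]<\infty$ for all $i$ and all $k\in\mathbb{N}$. Fix $x_0$, $\tau\in(0,1)$, $v\in B(0,\rho_{\max})$ and a nominal control $u\in U$ left continuous at $\tau$; let $x^\epsilon$ be the random trajectory under $u^\epsilon$ and observations $y_i=Y_i(\omega)$, and $x=x^0$. Then $$\frac{\partial_+}{\partial\epsilon}\mathbb{E}\left[\int_\tau^T c(x^\epsilon(t),u^\epsilon(t))\,dt\right]\Bigg|_{\epsilon=0}=\mathbb{E}\left[\int_\tau^T\frac{\partial}{\partial x}c(x(t),u(t))^{\mathrm{T}}\Psi(t)\,dt\right],$$ where $\Psi(t)=\lim_{\epsilon\to0^+}(x^\epsilon(t)-x(t))/\epsilon$ (computed pathwise) is the state variation.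
   Context: Fix positive integers $T,m,n_x,n_y$ and $\rho_{\max}\in(0,\infty)$; $B(0,\rho_{\max})$ is the closed Euclidean ball of radius $\rho_{\max}$ in $\mathbb{R}^m$; $U$ is the set of piecewise continuous $u:[0,T]\to\mathbb{R}^m$ with $\|u(t)\|_2\le\rho_{\max}$ for all $t$. $f:\mathbb{R}^{n_x}\times\mathbb{R}^m\to\mathbb{R}^{n_x}$ is continuously differentiable and there is $K_1\in[1,\infty)$ with $\|f(x',u')-f(x'',u'')\|_2\le K_1(\|x'-x''\|_2+\|u'-u''\|_2)$ for all $x',x''$ and $u',u''\in B(0,\rho_{\max})$. $g:\mathbb{R}^{n_x}\times\mathbb{R}^{n_y}\to\mathbb{R}^{n_x}$ is continuous and differentiable in its first argument, and there are $K_2,\dots,K_5\ge0$ and positive integers $L_1,L_2$ such that for all $x,y$ both $\|g(x,y)\|_2$ and $\|\frac{\partial}{\partial x}g(x,y)\|_2$ are at most $K_2+K_3\|x\|_2^{L_1}+K_4\|y\|_2^{L_2}+K_5\|x\|_2^{L_1}\|y\|_2^{L_2}$. For a control $w\in U$ and observations $(y_1,\dots,y_T)$ the hybrid trajectory from $x_0$ is: $x_1$ on $[0,1]$ solves $\dot x_1=f(x_1,w)$, $x_1(0)=x_0$; for $i=2,\dots,T$, $x_i$ on $[i-1,i]$ solves $\dot x_i=f(x_i,w)$ with $x_i(i-1)=g(x_{i-1}(i-1),y_{i-1})$; $x(t)=x_i(t)$ for $t\in[i-1,i)$, and $x(T)=g(x_T(T),y_T)$. Perturbed control: for $\epsilon\in[0,\tau]$,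 $u^\epsilon(t)=v$ if $t\in(\tau-\epsilon,\tau]$ and $u^\epsilon(t)=u(t)$ otherwise. Costs: $c:\mathbb{R}^{n_x}\times\mathbb{R}^m\to\mathbb{R}$ is continuous and continuously differentiable in $x$, and there are $K_6,K_7\ge0$ and a positive integer $L_3$ such that $|c(x,u)|$ and $\|\frac{\partial}{\partial x}c(x,u)\|_2$ are at most $K_6+K_7\|x\|_2^{L_3}$ for all $x$ and $u\in B(0,\rho_{\max})$. *)

theory Defs
  imports "HOL-Analysis.Analysis" "HOL-Probability.Probability"
begin

definition piecewise_continuous_on :: "real \<Rightarrow> real \<Rightarrow> (real \<Rightarrow> 'a::real_normed_vector) \<Rightarrow> bool" where
  "piecewise_continuous_on a b u \<longleftrightarrow>
     (\<exists>S. finite S \<and>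
        (\<forall>t\<in>{a..b} - S. continuous (at t within {a..b}) u) \<and>
        (\<forall>s\<in>S. (\<exists>l. (u \<longlongrightarrow> l) (at s within {a..<s})) \<and>
                (\<exists>l. (u \<longlongrightarrow> l) (at s within {s<..b}))))"

definition admissible_controls :: "nat \<Rightarrow> real \<Rightarrow> (real \<Rightarrow> 'm::euclidean_space) set" where
  "admissible_controls T \<rho> =
     {u. piecewise_continuous_on 0 (real T) u \<and> (\<forall>t\<in>{0..real T}. norm (u t) \<le> \<rho>)}"

definition needle :: "(real \<Rightarrow> 'm) \<Rightarrow> real \<Rightarrow> 'm \<Rightarrow> real \<Rightarrow> real \<Rightarrow> 'm" where
  "needle u \<tau> v \<epsilon> t = (if t \<in> {\<tau> - \<epsilon><..\<tau>} then v else u t)"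

text \<open>Solution on [t0,t1] of  x' = f(x, w(t)),  x(t0) = z  (integral/Caratheodory sense,
  the natural notion for piecewise continuous w); extended by z outside [t0,t1].\<close>
definition ode_sol :: "('x::euclidean_space \<Rightarrow> 'm \<Rightarrow> 'x) \<Rightarrow> (real \<Rightarrow> 'm) \<Rightarrow> real \<Rightarrow> real \<Rightarrow> 'x \<Rightarrow> real \<Rightarrow> 'x" where
  "ode_sol f w t0 t1 z = (THE \<phi>. continuous_on {t0..t1} \<phi> \<and>
      (\<forall>t\<in>{t0..t1}. \<phi> t = z + integral {t0..t} (\<lambda>s. f (\<phi> s) (w s))) \<and>
      (\<forall>t. t \<notin> {t0..t1} \<longrightarrow> \<phi> t = z))"

text \<open>hyb_start ... i = x_i(i-1) (initial value of the i-th segment, i \<ge> 1).\<close>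
fun hyb_start :: "('x::euclidean_space \<Rightarrow> 'm \<Rightarrow> 'x) \<Rightarrow> ('x \<Rightarrow> 'y \<Rightarrow> 'x) \<Rightarrow> (real \<Rightarrow> 'm)
                  \<Rightarrow> (nat \<Rightarrow> 'y) \<Rightarrow> 'x \<Rightarrow> nat \<Rightarrow> 'x" where
  "hyb_start f g w ys x0 0 = x0"
| "hyb_start f g w ys x0 (Suc 0) = x0"
| "hyb_start f g w ys x0 (Suc (Suc i)) =
     g (ode_sol f w (real i) (real (Suc i)) (hyb_start f g w ys x0 (Suc i)) (real (Suc i))) (ys (Suc i))"

definition hyb_seg :: "('x::euclidean_space \<Rightarrow> 'm \<Rightarrow> 'x) \<Rightarrow> ('x \<Rightarrow> 'y \<Rightarrow> 'x) \<Rightarrow> (real \<Rightarrow> 'm)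
                  \<Rightarrow> (nat \<Rightarrow> 'y) \<Rightarrow> 'x \<Rightarrow> nat \<Rightarrow> real \<Rightarrow> 'x" where
  "hyb_seg f g w ys x0 i = ode_sol f w (real i - 1) (real i) (hyb_start f g w ys x0 i)"

definition hyb_traj :: "('x::euclidean_space \<Rightarrow> 'm \<Rightarrow> 'x) \<Rightarrow> ('x \<Rightarrow> 'y \<Rightarrow> 'x) \<Rightarrow> nat \<Rightarrow> (real \<Rightarrow> 'm)
                  \<Rightarrow> (nat \<Rightarrow> 'y) \<Rightarrow> 'x \<Rightarrow> real \<Rightarrow> 'x" where
  "hyb_traj f g T w ys x0 t =
     (if t = real T then g (hyb_seg f g w ys x0 T (real T)) (ys T)
      else hyb_seg f g w ys x0 (nat \<lfloor>t\<rfloor> + 1) t)"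

end

(*
  Pathwise, for fixed observations ys, a needle of width \<epsilon> at \<tau> moves the state at time \<tau> by
  \<epsilon> (f (x \<tau>) v - f (x \<tau>) (u \<tau>)) + o(\<epsilon>).  After \<tau> this displacement is transported by the
  linearised flow on each unit interval and by the derivatives Dg of the jump maps, so
  \<epsilon> \<mapsto> x\<^sup>\<epsilon> t is right differentiable at 0 for every t \<ge> \<tau>, and by dominated convergence in t the
  cost is right differentiable with the stated pathwise derivative.  Gronwall's inequality together
  with the polynomial growth of g and Dg bounds the trajectories and the difference quotients
  of the cost by polynomials in the norms of the observations.  These bounds have finite
  expectation, so a second dominated convergence, now in \<omega>, passes the derivative through the
  expectation.
*)

theory Submission
  imports Defs
begin

section \<open>Gronwall's inequality and integral equations\<close>

lemma integrable_on_bounded_continuous_off_finite: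
  fixes h :: "real \<Rightarrow> 'a::euclidean_space"
  assumes S: "finite S" and h_cont: "continuous_on ({a..b} - S) h"
    and h_bound: "\<And>s. s \<in> {a..b} \<Longrightarrow> norm (h s) \<le> B"
  shows "h integrable_on {a..b}"
proof -
  have neg: "negligible S" using S by (rule negligible_finite)
  have L: "{a..b} - S \<in> sets lebesgue"
    using neg by (intro sets.Diff) (auto intro: negligible_imp_sets)
  have "(\<lambda>_. B) integrable_on ({a..b} - S)"
    by (rule integrable_spike_set[of _ "{a..b}"]) (auto intro: negligible_subset[OF neg])
  then have "h integrable_on ({a..b} - S)"
    by (rule measurable_bounded_by_integrable_imp_integrable
          [OF continuous_imp_measurable_on_sets_lebesgue[OF h_cont L] _ _ L])
       (use h_bound in auto)
  then show ?thesis
    by (rule integrable_spike_set) (auto intro: negligible_subset[OF neg])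
qed

lemma integrable_blinfun_apply_off_finite:
  fixes A :: "real \<Rightarrow> 'a::euclidean_space \<Rightarrow>\<^sub>L 'b::euclidean_space"
  assumes S: "finite S" and A_cont: "continuous_on ({a..b} - S) A"
    and A_bound: "\<And>s. s \<in> {a..b} \<Longrightarrow> norm (A s) \<le> B"
    and \<psi>: "continuous_on {a..b} \<psi>"
  shows "(\<lambda>s. A s (\<psi> s)) integrable_on {a..b}"
proof -
  obtain R where R: "\<And>s. s \<in> {a..b} \<Longrightarrow> norm (\<psi> s) \<le> R"
    using compact_imp_bounded[OF compact_continuous_image[OF \<psi> compact_Icc]]
    unfolding bounded_iff by blast
  show ?thesis
  proof (rule integrable_on_bounded_continuous_off_finite[OF S])
    show "continuous_on ({a..b} - S) (\<lambda>s. A s (\<psi> s))"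
      by (intro continuous_intros A_cont continuous_on_subset[OF \<psi>]) auto
    fix s assume s: "s \<in> {a..b}"
    have "norm (A s (\<psi> s)) \<le> norm (A s) * norm (\<psi> s)" by (rule norm_blinfun)
    also have "\<dots> \<le> B * R"
      using A_bound[OF s] R[OF s] by (intro mult_mono) (auto intro: order_trans[OF norm_ge_zero])
    finally show "norm (A s (\<psi> s)) \<le> B * R" .
  qed
qed

lemma gronwall_integral_inequality:
  fixes d :: "real \<Rightarrow> real"
  assumes d_cont: "continuous_on {a..b} d" and K: "0 \<le> K"
    and d_le: "\<And>t. t \<in> {a..b} \<Longrightarrow> d t \<le> C + K * integral {a..t} d"
    and t: "t \<in> {a..b}"
  shows "d t \<le> C * exp (K * (t - a))"
proof (cases "K = 0")
  case True
  then show ?thesis using d_le[OF t] by simp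
next
  case False
  with K have K: "K > 0" by simp
  define I where "I t = integral {a..t} d" for t
  \<comment> \<open>\<open>h\<close> is non-increasing because \<open>I' = d \<le> C + K I\<close>.\<close>
  define h where "h t = exp (- K * (t - a)) * (I t + C / K)" for t
  have h_deriv: "(h has_real_derivative exp (- K * (s - a)) * (d s - K * I s - C)) (at s within {a..t})"
    if s: "s \<in> {a..t}" for s
  proof -
    have "(I has_vector_derivative d s) (at s within {a..b})"
      unfolding I_def by (rule integral_has_vector_derivative[OF d_cont]) (use s t in auto)
    then have "(I has_real_derivative d s) (at s within {a..t})"
      using t by (auto simp: has_real_derivative_iff_has_vector_derivative
                       intro: has_vector_derivative_within_subset)
    then have "(h has_real_derivative exp (- K * (s - a)) * (- K) * (I s + C / K) + exp (- K * (s - a)) * d s)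
        (at s within {a..t})"
      unfolding h_def by (auto intro!: derivative_eq_intros)
    moreover have "exp (- K * (s - a)) * (- K) * (I s + C / K) + exp (- K * (s - a)) * d s
        = exp (- K * (s - a)) * (d s - K * I s - C)"
      using K by (simp add: field_simps)
    ultimately show ?thesis by simp
  qed
  have "a \<le> t" using t by simp
  then obtain s where s: "s \<in> {a..t}"
    and h_diff: "h t - h a = (exp (- K * (s - a)) * (d s - K * I s - C)) * (t - a)"
    using mvt_very_simple[of a t h "\<lambda>s x. (exp (- K * (s - a)) * (d s - K * I s - C)) * x"] h_deriv
    by (auto simp: has_field_derivative_def)
  have "d s - K * I s - C \<le> 0" using d_le[of s] s t unfolding I_def by auto
  then have "exp (- K * (s - a)) * (d s - K * I s - C) * (t - a) \<le> 0"
    using \<open>a \<le> t\<close> by (intro mult_nonpos_nonneg mult_nonneg_nonpos) auto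
  then have "exp (- K * (t - a)) * (I t + C / K) \<le> C / K"
    using h_diff by (simp add: h_def I_def)
  then have "(I t + C / K) / exp (K * (t - a)) \<le> C / K"
    by (simp add: exp_minus divide_inverse mult.commute)
  then have "I t + C / K \<le> C / K * exp (K * (t - a))"
    by (simp add: pos_divide_le_eq)
  then have "K * (I t + C / K) \<le> K * (C / K * exp (K * (t - a)))"
    using K by (intro mult_left_mono) auto
  then have "C + K * I t \<le> C * exp (K * (t - a))"
    using K by (simp add: distrib_left)
  then show ?thesis using d_le[OF t] unfolding I_def by simp
qed

lemma gronwall_integral_equation:
  fixes e G :: "real \<Rightarrow> 'a::euclidean_space"
  assumes e_cont: "continuous_on {a..b} e"
    and e_eq: "\<And>t. t \<in> {a..b} \<Longrightarrow> e t = e a + integral {a..t} G"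
    and G_int: "G integrable_on {a..b}"
    and h_int: "h integrable_on {a..b}" and h_nonneg: "\<And>s. s \<in> {a..b} \<Longrightarrow> 0 \<le> h s"
    and h_le: "integral {a..b} h \<le> \<Delta>"
    and B: "0 \<le> B" and G_bound: "\<And>s. s \<in> {a..b} \<Longrightarrow> norm (G s) \<le> h s + B * norm (e s)"
    and t: "t \<in> {a..b}"
  shows "norm (e t) \<le> (norm (e a) + \<Delta>) * exp (B * (t - a))"
proof (rule gronwall_integral_inequality[where d = "\<lambda>s. norm (e s)", OF _ B _ t])
  show d_cont: "continuous_on {a..b} (\<lambda>s. norm (e s))" by (intro continuous_intros e_cont)
  fix t assume t: "t \<in> {a..b}"
  have sub: "{a..t} \<subseteq> {a..b}" using t by auto
  have int_h: "h integrable_on {a..t}" and int_d: "(\<lambda>s. norm (e s)) integrable_on {a..t}"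
    using integrable_on_subinterval[OF h_int sub] integrable_continuous_real[OF continuous_on_subset[OF d_cont sub]]
    by auto
  have "norm (e t) \<le> norm (e a) + norm (integral {a..t} G)"
    using e_eq[OF t] by (simp add: norm_triangle_ineq)
  also have "norm (integral {a..t} G) \<le> integral {a..t} (\<lambda>s. h s + B * norm (e s))"
    using G_bound sub
    by (intro integral_norm_bound_integral integrable_on_subinterval[OF G_int sub] integrable_add int_h
          integrable_on_mult_right int_d) auto
  also have "\<dots> = integral {a..t} h + B * integral {a..t} (\<lambda>s. norm (e s))"
    by (simp add: integral_add int_h integrable_on_mult_right int_d)
  also have "integral {a..t} h \<le> \<Delta>"
    using integral_subset_le[OF sub int_h h_int] h_nonneg h_le by fastforce
  finally show "norm (e t) \<le> norm (e a) + \<Delta> + B * integral {a..t} (\<lambda>s. norm (e s))" by simp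
qed

lemma norm_diff_le_on_cball:
  fixes F :: "'a::real_normed_vector \<Rightarrow> 'b::real_normed_vector"
  assumes deriv: "\<And>x. (F has_derivative F' x) (at x)"
    and bound: "\<And>x. norm x \<le> r \<Longrightarrow> onorm (F' x) \<le> M"
    and a: "norm a \<le> r" and b: "norm b \<le> r"
  shows "norm (F a - F b) \<le> M * norm (a - b)"
  by (rule differentiable_bound[of "cball 0 r" F F'])
     (use a b bound in \<open>auto intro: has_derivative_at_withinI[OF deriv]\<close>)

lemma integral_power_shifted:
  assumes "a \<le> t"
  shows "integral {a..t} (\<lambda>s. (s - a) ^ n) = (t - a) ^ Suc n / real (Suc n)"
proof -
  have pow: "x ^ n + real n * x ^ (n - Suc 0) * x = real (Suc n) * x ^ n" for x :: real
    by (cases n) (auto simp: algebra_simps)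
  have "((\<lambda>s. (s - a) ^ n) has_integral ((t - a) ^ Suc n / real (Suc n) - (a - a) ^ Suc n / real (Suc n))) {a..t}"
    by (rule fundamental_theorem_of_calculus[OF assms])
       (auto intro!: derivative_eq_intros simp: has_real_derivative_iff_has_vector_derivative[symmetric]
             simp: pow simp del: of_nat_Suc)
  then show ?thesis by (simp add: integral_unique)
qed

definition picard_step :: "(real \<Rightarrow> 'a::real_normed_vector \<Rightarrow> 'a) \<Rightarrow> real \<Rightarrow> 'a \<Rightarrow> (real \<Rightarrow> 'a) \<Rightarrow> real \<Rightarrow> 'a"
  where "picard_step F a z \<phi> t = z + integral {a..t} (\<lambda>s. F s (\<phi> s))"

context
  fixes F :: "real \<Rightarrow> 'a::euclidean_space \<Rightarrow> 'a" and a b K :: real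
  assumes F_lipschitz: "\<And>s x y. s \<in> {a..b} \<Longrightarrow> norm (F s x - F s y) \<le> K * norm (x - y)"
    and F_integrable: "\<And>\<phi>. continuous_on {a..b} \<phi> \<Longrightarrow> (\<lambda>s. F s (\<phi> s)) integrable_on {a..b}"
begin

lemma integrable_on_picard_integrand:
  "continuous_on {a..b} \<phi> \<Longrightarrow> t \<in> {a..b} \<Longrightarrow> (\<lambda>s. F s (\<phi> s)) integrable_on {a..t}"
  by (rule integrable_subinterval_real[OF F_integrable]) auto

lemma continuous_on_picard_step:
  "continuous_on {a..b} \<phi> \<Longrightarrow> continuous_on {a..b} (picard_step F a z \<phi>)"
  unfolding picard_step_def by (intro continuous_intros indefinite_integral_continuous_1 F_integrable)

lemma continuous_on_picard_iterates: "continuous_on {a..b} ((picard_step F a z ^^ n) (\<lambda>_. z))"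
  by (induction n) (auto intro: continuous_on_picard_step)

lemma norm_picard_step_diff_le:
  assumes \<phi>: "continuous_on {a..b} \<phi>" and \<psi>: "continuous_on {a..b} \<psi>" and t: "t \<in> {a..b}"
  shows "norm (picard_step F a z \<phi> t - picard_step F a z \<psi> t)
           \<le> K * integral {a..t} (\<lambda>s. norm (\<phi> s - \<psi> s))"
proof -
  have int_\<phi>: "(\<lambda>s. F s (\<phi> s)) integrable_on {a..t}"
    and int_\<psi>: "(\<lambda>s. F s (\<psi> s)) integrable_on {a..t}"
    using integrable_on_picard_integrand \<phi> \<psi> t by auto
  have int_norm: "(\<lambda>s. norm (\<phi> s - \<psi> s)) integrable_on {a..t}"
    using t by (intro integrable_continuous_real continuous_intros continuous_on_subset[OF \<phi>]
                      continuous_on_subset[OF \<psi>]) auto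
  have "norm (picard_step F a z \<phi> t - picard_step F a z \<psi> t)
      = norm (integral {a..t} (\<lambda>s. F s (\<phi> s) - F s (\<psi> s)))"
    by (simp add: picard_step_def integral_diff[OF int_\<phi> int_\<psi>])
  also have "\<dots> \<le> integral {a..t} (\<lambda>s. K * norm (\<phi> s - \<psi> s))"
    using t F_lipschitz
    by (intro integral_norm_bound_integral integrable_diff int_\<phi> int_\<psi> integrable_on_mult_right int_norm)
       auto
  finally show ?thesis by simp
qed

lemma picard_iterates_dist_le:
  assumes K: "0 \<le> K" and F_z: "\<And>s. s \<in> {a..b} \<Longrightarrow> norm (F s z) \<le> B" and t: "t \<in> {a..b}"
  shows "norm ((picard_step F a z ^^ Suc n) (\<lambda>_. z) t - (picard_step F a z ^^ n) (\<lambda>_. z) t)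
           \<le> B * K ^ n * (t - a) ^ Suc n / fact (Suc n)"
  using t
proof (induction n arbitrary: t)
  case 0
  have "norm (integral {a..t} (\<lambda>s. F s z)) \<le> integral {a..t} (\<lambda>s. B)"
    using integrable_on_picard_integrand[of "\<lambda>_. z" t] 0 F_z
    by (intro integral_norm_bound_integral) auto
  then show ?case using 0 by (simp add: picard_step_def mult.commute)
next
  case (Suc n)
  let ?\<phi> = "\<lambda>n. (picard_step F a z ^^ n) (\<lambda>_. z)"
  have cont: "continuous_on {a..b} (?\<phi> n)" for n
    by (rule continuous_on_picard_iterates)
  have "norm (?\<phi> (Suc (Suc n)) t - ?\<phi> (Suc n) t)
      = norm (picard_step F a z (?\<phi> (Suc n)) t - picard_step F a z (?\<phi> n) t)"
    by simp
  also have "\<dots> \<le> K * integral {a..t} (\<lambda>s. norm (?\<phi> (Suc n) s - ?\<phi> n s))"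
    by (rule norm_picard_step_diff_le[OF cont cont Suc.prems])
  also have "\<dots> \<le> K * integral {a..t} (\<lambda>s. B * K ^ n / fact (Suc n) * (s - a) ^ Suc n)"
    using Suc.prems Suc.IH
    by (intro mult_left_mono[OF _ K] integral_le integrable_continuous_real continuous_intros
              continuous_on_subset[OF cont]) auto
  also have "\<dots> = K * (B * K ^ n / fact (Suc n) * ((t - a) ^ Suc (Suc n) / real (Suc (Suc n))))"
    using Suc.prems by (simp only: integral_mult_right integral_power_shifted atLeastAtMost_iff)
  also have "\<dots> = B * K ^ Suc n * (t - a) ^ Suc (Suc n) / fact (Suc (Suc n))"
    by (simp only: fact_Suc[of "Suc n"]) (simp add: field_simps del: of_nat_Suc fact_Suc)
  finally show ?case .
qed

lemma picard_iterates_uniform_limit: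
  assumes ab: "a \<le> b" and K: "0 \<le> K" and F_z: "\<And>s. s \<in> {a..b} \<Longrightarrow> norm (F s z) \<le> B"
  obtains \<psi> where "uniform_limit {a..b} (\<lambda>n. (picard_step F a z ^^ n) (\<lambda>_. z)) \<psi> sequentially"
proof -
  define \<phi> where "\<phi> n = (picard_step F a z ^^ n) (\<lambda>_. z)" for n
  have B: "0 \<le> B" using F_z[of a] ab by (meson atLeastAtMost_iff norm_ge_zero order.trans order_refl)
  define M where "M n = B * (b - a) * (inverse (fact n) * (K * (b - a)) ^ n)" for n
  have M: "norm (\<phi> (Suc n) t - \<phi> n t) \<le> M n" if t: "t \<in> {a..b}" for n t
  proof -
    have "norm (\<phi> (Suc n) t - \<phi> n t) \<le> B * K ^ n * (t - a) ^ Suc n / fact (Suc n)"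
      unfolding \<phi>_def by (rule picard_iterates_dist_le[OF K F_z t])
    also have "\<dots> \<le> B * K ^ n * (b - a) ^ Suc n / fact n"
      using t B K by (intro frac_le mult_left_mono power_mono fact_mono) auto
    also have "\<dots> = M n" unfolding M_def power_mult_distrib by (simp add: field_simps)
    finally show ?thesis .
  qed
  have "summable M"
    unfolding M_def by (intro summable_mult summable_exp)
  then have "uniform_limit {a..b} (\<lambda>n t. \<Sum>i<n. \<phi> (Suc i) t - \<phi> i t) (\<lambda>t. \<Sum>i. \<phi> (Suc i) t - \<phi> i t) sequentially"
    using M by (intro Weierstrass_m_test) auto
  moreover have "(\<Sum>i<n. \<phi> (Suc i) t - \<phi> i t) = \<phi> n t - z" for n t
    using sum_lessThan_telescope[of "\<lambda>i. \<phi> i t" n] by (simp add: \<phi>_def)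
  ultimately have "uniform_limit {a..b} (\<lambda>n t. z + (\<phi> n t - z)) (\<lambda>t. z + (\<Sum>i. \<phi> (Suc i) t - \<phi> i t)) sequentially"
    by (intro uniform_limit_intros) simp_all
  then show ?thesis using that unfolding \<phi>_def by auto
qed

lemma integral_equation_solution_exists:
  assumes ab: "a \<le> b" and K: "0 \<le> K" and F_z: "\<And>s. s \<in> {a..b} \<Longrightarrow> norm (F s z) \<le> B"
  shows "\<exists>\<phi>. continuous_on {a..b} \<phi> \<and> (\<forall>t\<in>{a..b}. \<phi> t = z + integral {a..t} (\<lambda>s. F s (\<phi> s)))"
proof -
  define \<phi> where "\<phi> n = (picard_step F a z ^^ n) (\<lambda>_. z)" for n
  have cont: "continuous_on {a..b} (\<phi> n)" for n
    unfolding \<phi>_def by (rule continuous_on_picard_iterates)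
  obtain \<psi> where lim: "uniform_limit {a..b} \<phi> \<psi> sequentially"
    using picard_iterates_uniform_limit[OF ab K F_z] unfolding \<phi>_def by blast
  have \<psi>: "continuous_on {a..b} \<psi>"
    by (rule uniform_limit_theorem[OF _ lim]) (auto intro: cont always_eventually)
  have "\<psi> t = picard_step F a z \<psi> t" if t: "t \<in> {a..b}" for t
  proof (rule LIMSEQ_unique)
    show "(\<lambda>n. \<phi> (Suc n) t) \<longlonglongrightarrow> \<psi> t"
      using tendsto_uniform_limitI[OF lim t] by (rule LIMSEQ_Suc)
    show "(\<lambda>n. \<phi> (Suc n) t) \<longlonglongrightarrow> picard_step F a z \<psi> t"
    proof (rule tendstoI)
      fix e :: real assume e: "e > 0"
      define e' where "e' = e / (K * (b - a) + 1)"
      have KE: "K * (b - a) + 1 > 0" using K ab by (simp add: add_nonneg_pos)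
      have "e' > 0" using e KE by (simp add: e'_def)
      have "K * (b - a) * e' < (K * (b - a) + 1) * e'" using \<open>e' > 0\<close> by simp
      also have "\<dots> = e" using KE by (simp add: e'_def)
      finally have KE: "K * (b - a) * e' < e" .
      from uniform_limitD[OF lim \<open>e' > 0\<close>]
      show "\<forall>\<^sub>F n in sequentially. dist (\<phi> (Suc n) t) (picard_step F a z \<psi> t) < e"
      proof eventually_elim
        case (elim n)
        have "dist (\<phi> (Suc n) t) (picard_step F a z \<psi> t) \<le> K * integral {a..t} (\<lambda>s. norm (\<phi> n s - \<psi> s))"
          using norm_picard_step_diff_le[OF cont \<psi> t] by (simp add: \<phi>_def dist_norm)
        also have "\<dots> \<le> K * integral {a..t} (\<lambda>s. e')"
          using elim t
          by (intro mult_left_mono[OF _ K] integral_le integrable_continuous_real continuous_intros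
                    continuous_on_subset[OF cont] continuous_on_subset[OF \<psi>])
             (auto simp: dist_norm less_imp_le)
        also have "\<dots> \<le> K * (b - a) * e'"
          using t K \<open>e' > 0\<close> by (simp add: mult.assoc mult_left_mono)
        finally show ?case using KE by linarith
      qed
    qed
  qed
  then show ?thesis using \<psi> unfolding picard_step_def by blast
qed

end

lemma linear_integral_equation_solvable:
  fixes A :: "real \<Rightarrow> 'a::euclidean_space \<Rightarrow>\<^sub>L 'a"
  assumes ab: "a \<le> b" and S: "finite S" and A_cont: "continuous_on ({a..b} - S) A"
    and A_bound: "\<And>s. s \<in> {a..b} \<Longrightarrow> norm (A s) \<le> B"
  shows "\<exists>\<Psi>. continuous_on {a..b} \<Psi> \<and> (\<forall>t\<in>{a..b}. \<Psi> t = L + integral {a..t} (\<lambda>s. A s (\<Psi> s)))"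
proof -
  have B: "0 \<le> B" using A_bound[of a] ab by (meson atLeastAtMost_iff norm_ge_zero order_trans order_refl)
  show ?thesis
  proof (rule integral_equation_solution_exists[where K = B])
    show "norm (A s x - A s y) \<le> B * norm (x - y)" if "s \<in> {a..b}" for s x y
      using norm_blinfun[of "A s" "x - y"] A_bound[OF that] mult_right_mono[OF _ norm_ge_zero]
      by (metis blinfun.diff_right order_trans)
    show "(\<lambda>s. A s (\<phi> s)) integrable_on {a..b}" if "continuous_on {a..b} \<phi>" for \<phi>
      by (rule integrable_blinfun_apply_off_finite[OF S A_cont A_bound that])
    show "norm (A s L) \<le> B * norm L" if "s \<in> {a..b}" for s
      using norm_blinfun[of "A s" L] A_bound[OF that] mult_right_mono[OF _ norm_ge_zero]
      by (metis order_trans)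
  qed (use ab B in auto)
qed

section \<open>One-sided derivatives and needle perturbations\<close>

lemma has_vector_derivative_within_iff_le:
  "(p has_vector_derivative L) (at x within S) \<longleftrightarrow>
   (\<forall>e>0. \<exists>d>0. \<forall>y\<in>S. \<bar>y - x\<bar> < d \<longrightarrow> norm (p y - p x - (y - x) *\<^sub>R L) \<le> e * \<bar>y - x\<bar>)"
  unfolding has_vector_derivative_def has_derivative_within_alt
  by (simp add: bounded_linear_scaleR_left)

lemma difference_quotient_tendsto_at_right:
  assumes p: "(p has_vector_derivative L) (at 0 within {0..e})" and e: "0 < e"
  shows "((\<lambda>\<epsilon>. (p \<epsilon> - p 0) /\<^sub>R \<epsilon>) \<longlongrightarrow> L) (at_right 0)"
proof (rule tendstoI)
  fix \<delta> :: real assume \<delta>: "\<delta> > 0"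
  obtain d where d: "d > 0" "\<And>y. y \<in> {0..e} \<Longrightarrow> \<bar>y\<bar> < d \<Longrightarrow> norm (p y - p 0 - y *\<^sub>R L) \<le> \<delta> / 2 * \<bar>y\<bar>"
    using p[unfolded has_vector_derivative_within_iff_le diff_zero] \<delta> by (meson half_gt_zero)
  show "\<forall>\<^sub>F \<epsilon> in at_right 0. dist ((p \<epsilon> - p 0) /\<^sub>R \<epsilon>) L < \<delta>"
    unfolding eventually_at_right_field
  proof (intro exI[of _ "min d e"] conjI allI impI)
    show "0 < min d e" using d e by simp
    fix y :: real assume y: "0 < y" "y < min d e"
    have "(p y - p 0) /\<^sub>R y - L = (p y - p 0 - y *\<^sub>R L) /\<^sub>R y" using y by (simp add: algebra_simps)
    then have "dist ((p y - p 0) /\<^sub>R y) L = norm (p y - p 0 - y *\<^sub>R L) / y" using y by (simp add: dist_norm divide_inverse mult.commute)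
    also have "\<dots> \<le> \<delta> / 2 * y / y" using d(2)[of y] y by (intro divide_right_mono) auto
    also have "\<dots> < \<delta>" using y \<delta> by simp
    finally show "dist ((p y - p 0) /\<^sub>R y) L < \<delta>" .
  qed
qed

lemma filterlim_at_right_0_sequentially:
  fixes e :: "nat \<Rightarrow> real"
  assumes "\<And>n. 0 < e n" and "e \<longlonglongrightarrow> 0"
  shows "filterlim e (at_right 0) sequentially"
proof -
  have "\<forall>n. e n \<in> {0<..} \<and> e n \<noteq> 0" using assms(1) by (simp add: less_imp_neq[symmetric])
  then show ?thesis unfolding filterlim_at using assms(2) by (auto intro: always_eventually)
qed

(* Not a simp rule: rewriting needle u \<tau> v 0 to u inside hyb_traj would separate the nominal
   trajectory from the \<epsilon>-indexed family it belongs to. *)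
lemma needle_zero: "needle u \<tau> v 0 = u"
  by (rule ext) (simp add: needle_def)

lemma continuous_on_needle:
  assumes u: "continuous_on T u" and n1: "\<tau> - \<epsilon> \<notin> T" and n2: "\<tau> \<notin> T"
  shows "continuous_on T (needle u \<tau> v \<epsilon>)"
  unfolding continuous_on_eq_continuous_within
proof
  fix x assume x: "x \<in> T"
  have ux: "continuous (at x within T) u" using u x by (simp add: continuous_on_eq_continuous_within)
  consider "x \<in> {\<tau> - \<epsilon><..<\<tau>}" | "x < \<tau> - \<epsilon>" | "x > \<tau>"
    using x n1 n2 by (cases "x < \<tau> - \<epsilon>"; cases "x > \<tau>") (auto simp: not_less less_le)
  then show "continuous (at x within T) (needle u \<tau> v \<epsilon>)"
  proof cases
    case 1
    show ?thesis
      by (rule continuous_transform_within[of x T "\<lambda>_. v" "min (x - (\<tau> - \<epsilon>)) (\<tau> - x)"])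
         (use 1 x in \<open>auto simp: needle_def dist_real_def\<close>)
  next
    case 2
    show ?thesis
      by (rule continuous_transform_within[OF ux, of "\<tau> - \<epsilon> - x"])
         (use 2 x in \<open>auto simp: needle_def dist_real_def\<close>)
  next
    case 3
    show ?thesis
      by (rule continuous_transform_within[OF ux, of "x - \<tau>"])
         (use 3 x in \<open>auto simp: needle_def dist_real_def\<close>)
  qed
qed

section \<open>Controlled differential equations\<close>

lemma piecewise_continuous_on_imp_continuous_off_finite:
  assumes "piecewise_continuous_on a b u"
  obtains S where "finite S" "continuous_on ({a..b} - S) u"
proof -
  obtain S where "finite S" "\<forall>t\<in>{a..b} - S. continuous (at t within {a..b}) u"
    using assms unfolding piecewise_continuous_on_def by blast
  then show ?thesis
    using that unfolding continuous_on_eq_continuous_within by (blast intro: continuous_within_subset)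
qed

lemma ode_sol_cong:
  assumes "\<And>s. s \<in> {a..b} \<Longrightarrow> w s = w' s"
  shows "ode_sol f w a b z = ode_sol f w' a b z"
proof -
  have "t \<in> {a..b} \<Longrightarrow> integral {a..t} (\<lambda>s. f (\<phi> s) (w s)) = integral {a..t} (\<lambda>s. f (\<phi> s) (w' s))"
    for \<phi> t by (rule integral_cong) (use assms in auto)
  then show ?thesis unfolding ode_sol_def by simp
qed

locale lipschitz_control_system =
  fixes f :: "'x::euclidean_space \<Rightarrow> 'm::euclidean_space \<Rightarrow> 'x" and \<rho> K1 :: real
  assumes f_cont: "continuous_on UNIV (\<lambda>(x, w). f x w)"
    and K1: "0 \<le> K1" and rho: "0 \<le> \<rho>"
    and f_lipschitz: "\<And>x' x'' u' u''. norm u' \<le> \<rho> \<Longrightarrow> norm u'' \<le> \<rho> \<Longrightarrow>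
                  norm (f x' u' - f x'' u'') \<le> K1 * (norm (x' - x'') + norm (u' - u''))"
begin

definition admissible_on :: "real \<Rightarrow> real \<Rightarrow> (real \<Rightarrow> 'm) \<Rightarrow> bool" where
  "admissible_on a b w \<longleftrightarrow> (\<exists>S. finite S \<and> continuous_on ({a..b} - S) w) \<and> (\<forall>s\<in>{a..b}. norm (w s) \<le> \<rho>)"

definition integral_solution :: "real \<Rightarrow> real \<Rightarrow> (real \<Rightarrow> 'm) \<Rightarrow> (real \<Rightarrow> 'x) \<Rightarrow> bool" where
  "integral_solution a b w \<phi> \<longleftrightarrow> continuous_on {a..b} \<phi> \<and>
     (\<forall>t\<in>{a..b}. \<phi> t = \<phi> a + integral {a..t} (\<lambda>s. f (\<phi> s) (w s)))"

lemma integral_solution_continuous: "integral_solution a b w \<phi> \<Longrightarrow> continuous_on {a..b} \<phi>"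
  unfolding integral_solution_def by blast

lemma integral_solution_eq:
  "integral_solution a b w \<phi> \<Longrightarrow> t \<in> {a..b} \<Longrightarrow> \<phi> t = \<phi> a + integral {a..t} (\<lambda>s. f (\<phi> s) (w s))"
  unfolding integral_solution_def by blast

definition C0 :: real where "C0 = norm (f 0 0) + K1 * \<rho>"

lemma admissible_on_subinterval: assumes "admissible_on a b w" "a \<le> c" "d \<le> b" shows "admissible_on c d w"
proof -
  obtain S where S: "finite S" "continuous_on ({a..b} - S) w" and wb: "\<forall>s\<in>{a..b}. norm (w s) \<le> \<rho>"
    using assms(1) unfolding admissible_on_def by blast
  have "continuous_on ({c..d} - S) w" by (rule continuous_on_subset[OF S(2)]) (use assms in auto)
  then show ?thesis unfolding admissible_on_def using S(1) wb assms by auto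
qed

lemma admissible_on_admissible_controls:
  assumes "u \<in> admissible_controls T \<rho>"
  shows "admissible_on 0 T u"
proof -
  have pc: "piecewise_continuous_on 0 (real T) u" and bound: "\<forall>t\<in>{0..real T}. norm (u t) \<le> \<rho>"
    using assms unfolding admissible_controls_def by auto
  obtain S where "finite S" "continuous_on ({0..real T} - S) u"
    by (rule piecewise_continuous_on_imp_continuous_off_finite[OF pc])
  then show ?thesis unfolding admissible_on_def using bound by blast
qed

lemma admissible_on_bound: "admissible_on a b w \<Longrightarrow> s \<in> {a..b} \<Longrightarrow> norm (w s) \<le> \<rho>"
  unfolding admissible_on_def by blast

lemma C0_nonneg: "0 \<le> C0"
  unfolding C0_def using K1 rho by simp

lemma norm_f_le: "norm w \<le> \<rho> \<Longrightarrow> norm (f x w) \<le> C0 + K1 * norm x"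
proof -
  assume w: "norm w \<le> \<rho>"
  have "norm (f x w) \<le> norm (f 0 0) + norm (f x w - f 0 0)" by (rule norm_triangle_sub)
  also have "norm (f x w - f 0 0) \<le> K1 * (norm (x - 0) + norm (w - 0))"
    by (rule f_lipschitz) (use w rho in auto)
  also have "K1 * (norm (x - 0) + norm (w - 0)) \<le> K1 * (norm x + \<rho>)"
    using w K1 by (intro mult_left_mono) auto
  finally show ?thesis by (simp add: C0_def algebra_simps)
qed

lemma f_lipschitz_state: "norm w \<le> \<rho> \<Longrightarrow> norm (f x w - f y w) \<le> K1 * norm (x - y)"
  using f_lipschitz[of w w x y] by simp

lemma continuous_on_f_comp:
  assumes "continuous_on S \<phi>" "continuous_on S w"
  shows "continuous_on S (\<lambda>s. f (\<phi> s) (w s))"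
  using continuous_on_compose2[OF f_cont continuous_on_Pair[OF assms]] by simp

lemma integrable_on_f_comp:
  assumes w: "admissible_on a b w" and \<phi>: "continuous_on {a..b} \<phi>" and cd: "{c..d} \<subseteq> {a..b}"
  shows "(\<lambda>s. f (\<phi> s) (w s)) integrable_on {c..d}"
proof -
  obtain S where S: "finite S" "continuous_on ({a..b} - S) w" and wb: "\<forall>s\<in>{a..b}. norm (w s) \<le> \<rho>"
    using w unfolding admissible_on_def by blast
  have "bounded (\<phi> ` {a..b})"
    by (intro compact_imp_bounded compact_continuous_image \<phi>) auto
  then obtain R where R: "\<And>s. s \<in> {a..b} \<Longrightarrow> norm (\<phi> s) \<le> R"
    unfolding bounded_iff by blast
  have "(\<lambda>s. f (\<phi> s) (w s)) integrable_on {a..b}"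
  proof (rule integrable_on_bounded_continuous_off_finite[OF S(1)])
    show "continuous_on ({a..b} - S) (\<lambda>s. f (\<phi> s) (w s))"
      by (rule continuous_on_f_comp[OF continuous_on_subset[OF \<phi>] S(2)]) auto
    fix s assume s: "s \<in> {a..b}"
    show "norm (f (\<phi> s) (w s)) \<le> C0 + K1 * R"
      using norm_f_le[OF wb[rule_format, OF s], of "\<phi> s"] R[OF s] K1
      by (meson add_left_mono mult_left_mono order_trans)
  qed
  then show ?thesis using cd by (rule integrable_on_subinterval)
qed

lemma integral_solution_diff_le:
  assumes w1: "admissible_on a b w1" and w2: "admissible_on a b w2"
    and s1: "integral_solution a b w1 \<phi>" and s2: "integral_solution a b w2 \<psi>"
    and hint: "h integrable_on {a..b}"
    and hb: "\<And>s. s \<in> {a..b} \<Longrightarrow> norm (w1 s - w2 s) \<le> h s"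
    and hD: "integral {a..b} h \<le> \<Delta>"
    and t: "t \<in> {a..b}"
  shows "norm (\<phi> t - \<psi> t) \<le> (norm (\<phi> a - \<psi> a) + K1 * \<Delta>) * exp (K1 * (t - a))"
proof (rule gronwall_integral_equation[where G = "\<lambda>s. f (\<phi> s) (w1 s) - f (\<psi> s) (w2 s)" and h = "\<lambda>s. K1 * h s"])
  have c\<phi>: "continuous_on {a..b} \<phi>" and c\<psi>: "continuous_on {a..b} \<psi>"
    using s1 s2 by (auto intro: integral_solution_continuous)
  have i1: "(\<lambda>s. f (\<phi> s) (w1 s)) integrable_on {a..t}" and i2: "(\<lambda>s. f (\<psi> s) (w2 s)) integrable_on {a..t}"
    if "t \<in> {a..b}" for t
    using integrable_on_f_comp[OF w1 c\<phi>] integrable_on_f_comp[OF w2 c\<psi>] that by auto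
  show "continuous_on {a..b} (\<lambda>s. \<phi> s - \<psi> s)" by (intro continuous_intros c\<phi> c\<psi>)
  show "\<phi> t - \<psi> t = \<phi> a - \<psi> a + integral {a..t} (\<lambda>s. f (\<phi> s) (w1 s) - f (\<psi> s) (w2 s))" if "t \<in> {a..b}" for t
    using integral_solution_eq[OF s1 that] integral_solution_eq[OF s2 that]
    by (simp add: integral_diff[OF i1[OF that] i2[OF that]])
  show "(\<lambda>s. f (\<phi> s) (w1 s) - f (\<psi> s) (w2 s)) integrable_on {a..b}"
    using i1[of b] i2[of b] t by (auto intro: integrable_diff)
  show "(\<lambda>s. K1 * h s) integrable_on {a..b}" by (rule integrable_on_mult_right[OF hint])
  show "0 \<le> K1 * h s" if "s \<in> {a..b}" for s
    using K1 hb[OF that] by (simp add: order_trans[OF norm_ge_zero])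
  show "integral {a..b} (\<lambda>s. K1 * h s) \<le> K1 * \<Delta>" using hD K1 by (simp add: mult_left_mono)
  show "norm (f (\<phi> s) (w1 s) - f (\<psi> s) (w2 s)) \<le> K1 * h s + K1 * norm (\<phi> s - \<psi> s)" if "s \<in> {a..b}" for s
    using f_lipschitz[OF admissible_on_bound[OF w1 that] admissible_on_bound[OF w2 that], of "\<phi> s" "\<psi> s"]
      mult_left_mono[OF hb[OF that] K1]
    by (simp add: algebra_simps)
qed (use K1 t in auto)

lemma integral_solution_norm_le:
  assumes w: "admissible_on a b w" and s: "integral_solution a b w \<phi>" and t: "t \<in> {a..b}"
  shows "norm (\<phi> t) \<le> (norm (\<phi> a) + C0 * (b - a)) * exp (K1 * (t - a))"
proof (rule gronwall_integral_equation[where G = "\<lambda>s. f (\<phi> s) (w s)" and h = "\<lambda>_. C0"])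
  show "continuous_on {a..b} \<phi>" by (rule integral_solution_continuous[OF s])
  show "(\<lambda>s. f (\<phi> s) (w s)) integrable_on {a..b}"
    by (rule integrable_on_f_comp[OF w integral_solution_continuous[OF s]]) simp
  show "norm (f (\<phi> s) (w s)) \<le> C0 + K1 * norm (\<phi> s)" if "s \<in> {a..b}" for s
    by (rule norm_f_le[OF admissible_on_bound[OF w that]])
  show "\<phi> t = \<phi> a + integral {a..t} (\<lambda>s. f (\<phi> s) (w s))" if "t \<in> {a..b}" for t
    by (rule integral_solution_eq[OF s that])
qed (use C0_nonneg K1 t in auto)

lemma integral_solution_unique:
  assumes w: "admissible_on a b w"
    and \<phi>: "integral_solution a b w \<phi>" and \<psi>: "integral_solution a b w \<psi>"
    and start: "\<phi> a = \<psi> a" and t: "t \<in> {a..b}"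
  shows "\<phi> t = \<psi> t"
  using integral_solution_diff_le[OF w w \<phi> \<psi>, of "\<lambda>_. 0" 0 t] start t by auto

lemma ex_integral_solution:
  assumes w: "admissible_on a b w" and ab: "a \<le> b"
  shows "\<exists>\<phi>. continuous_on {a..b} \<phi> \<and> (\<forall>t\<in>{a..b}. \<phi> t = z + integral {a..t} (\<lambda>s. f (\<phi> s) (w s))) \<and>
    (\<forall>t. t \<notin> {a..b} \<longrightarrow> \<phi> t = z)"
proof -
  have "\<exists>\<phi>. continuous_on {a..b} \<phi> \<and> (\<forall>t\<in>{a..b}. \<phi> t = z + integral {a..t} (\<lambda>s. f (\<phi> s) (w s)))"
  proof (rule integral_equation_solution_exists[where F = "\<lambda>s x. f x (w s)" and K = K1])
    show "norm (f x (w s) - f y (w s)) \<le> K1 * norm (x - y)" if "s \<in> {a..b}" for s x y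
      by (rule f_lipschitz_state[OF admissible_on_bound[OF w that]])
    show "(\<lambda>s. f (\<phi> s) (w s)) integrable_on {a..b}" if "continuous_on {a..b} \<phi>" for \<phi>
      by (rule integrable_on_f_comp[OF w that]) simp
    show "norm (f z (w s)) \<le> C0 + K1 * norm z" if "s \<in> {a..b}" for s
      by (rule norm_f_le[OF admissible_on_bound[OF w that]])
  qed (fact ab K1)+
  then obtain \<phi> where \<phi>: "continuous_on {a..b} \<phi>"
    "\<forall>t\<in>{a..b}. \<phi> t = z + integral {a..t} (\<lambda>s. f (\<phi> s) (w s))"
    by blast
  define \<phi>' where "\<phi>' t = (if t \<in> {a..b} then \<phi> t else z)" for t
  have "continuous_on {a..b} \<phi>'"
    using \<phi>(1) by (rule continuous_on_eq) (simp add: \<phi>'_def)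
  moreover have "\<phi>' t = z + integral {a..t} (\<lambda>s. f (\<phi>' s) (w s))" if t: "t \<in> {a..b}" for t
  proof -
    have "integral {a..t} (\<lambda>s. f (\<phi>' s) (w s)) = integral {a..t} (\<lambda>s. f (\<phi> s) (w s))"
      by (rule integral_cong) (use t in \<open>simp add: \<phi>'_def\<close>)
    then show ?thesis using \<phi>(2) t by (simp add: \<phi>'_def)
  qed
  moreover have "\<phi>' t = z" if "t \<notin> {a..b}" for t using that by (auto simp: \<phi>'_def)
  ultimately show ?thesis by blast
qed

lemma ode_sol_integral_solution:
  assumes w: "admissible_on a b w" and ab: "a \<le> b"
  shows "integral_solution a b w (ode_sol f w a b z)"
    and "ode_sol f w a b z a = z"
    and "t \<notin> {a..b} \<Longrightarrow> ode_sol f w a b z t = z"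
proof -
  define Q where "Q \<phi> \<longleftrightarrow> continuous_on {a..b} \<phi> \<and>
      (\<forall>t\<in>{a..b}. \<phi> t = z + integral {a..t} (\<lambda>s. f (\<phi> s) (w s))) \<and>
      (\<forall>t. t \<notin> {a..b} \<longrightarrow> \<phi> t = z)" for \<phi>
  have Q_start: "\<phi> a = z" if "Q \<phi>" for \<phi> using that ab unfolding Q_def by auto
  have Q_solution: "integral_solution a b w \<phi>" if "Q \<phi>" for \<phi>
    using that Q_start[OF that] unfolding Q_def integral_solution_def by auto
  obtain \<phi>' where Q\<phi>': "Q \<phi>'"
    using ex_integral_solution[OF w ab] unfolding Q_def by blast
  have "ode_sol f w a b z = \<phi>'"
    unfolding ode_sol_def Q_def[symmetric]
  proof (rule the_equality[where P = Q, OF Q\<phi>'], rule ext)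
    fix \<psi> t assume Q\<psi>: "Q \<psi>"
    show "\<psi> t = \<phi>' t"
    proof (cases "t \<in> {a..b}")
      case True
      show ?thesis
        by (rule integral_solution_unique[OF w Q_solution[OF Q\<psi>] Q_solution[OF Q\<phi>'] _ True])
           (simp only: Q_start[OF Q\<psi>] Q_start[OF Q\<phi>'])
    next
      case False
      then show ?thesis using Q\<psi> Q\<phi>' unfolding Q_def by simp
    qed
  qed
  then show "integral_solution a b w (ode_sol f w a b z)" "ode_sol f w a b z a = z"
    using Q_solution[OF Q\<phi>'] Q_start[OF Q\<phi>'] by simp_all
  show "t \<notin> {a..b} \<Longrightarrow> ode_sol f w a b z t = z"
    using \<open>ode_sol f w a b z = \<phi>'\<close> Q\<phi>' unfolding Q_def by simp
qed

lemma integral_solution_subinterval: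
  assumes w: "admissible_on a b w" and s: "integral_solution a b w \<phi>" and cd: "a \<le> c" "c \<le> d" "d \<le> b"
  shows "integral_solution c d w \<phi>"
proof -
  have c\<phi>: "continuous_on {a..b} \<phi>" using s unfolding integral_solution_def by auto
  show ?thesis unfolding integral_solution_def
  proof (intro conjI ballI)
    show "continuous_on {c..d} \<phi>" by (rule continuous_on_subset[OF c\<phi>]) (use cd in auto)
    fix t assume t: "t \<in> {c..d}"
    have i: "(\<lambda>s. f (\<phi> s) (w s)) integrable_on {a..t}" by (rule integrable_on_f_comp[OF w c\<phi>]) (use t cd in auto)
    have A: "integral {a..c} (\<lambda>s. f (\<phi> s) (w s)) + integral {c..t} (\<lambda>s. f (\<phi> s) (w s)) = integral {a..t} (\<lambda>s. f (\<phi> s) (w s))"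
      by (rule Henstock_Kurzweil_Integration.integral_combine[OF _ _ i]) (use t cd in auto)
    have E: "\<forall>t\<in>{a..b}. \<phi> t = \<phi> a + integral {a..t} (\<lambda>s. f (\<phi> s) (w s))"
      using s unfolding integral_solution_def by blast
    have B: "\<phi> t = \<phi> a + integral {a..t} (\<lambda>s. f (\<phi> s) (w s))" by (rule E[rule_format]) (use t cd in auto)
    have C: "\<phi> c = \<phi> a + integral {a..c} (\<lambda>s. f (\<phi> s) (w s))" by (rule E[rule_format]) (use t cd in auto)
    show "\<phi> t = \<phi> c + integral {c..t} (\<lambda>s. f (\<phi> s) (w s))"
      unfolding B C A[symmetric] by (rule add.assoc[symmetric])
  qed
qed

lemma integral_solution_cong:
  assumes "negligible N" "\<And>s. s \<in> {a..b} - N \<Longrightarrow> w s = w' s"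
  shows "integral_solution a b w \<phi> \<longleftrightarrow> integral_solution a b w' \<phi>"
proof -
  have "integral {a..t} (\<lambda>s. f (\<phi> s) (w s)) = integral {a..t} (\<lambda>s. f (\<phi> s) (w' s))" if "t \<in> {a..b}" for t
    by (rule integral_spike[OF assms(1)]) (use assms(2) that in force)
  then show ?thesis unfolding integral_solution_def by auto
qed

lemma admissible_on_needle:
  assumes u: "admissible_on a b u" and v: "norm v \<le> \<rho>"
  shows "admissible_on a b (needle u \<tau> v \<epsilon>)"
proof -
  obtain S where S: "finite S" "continuous_on ({a..b} - S) u" and ub: "\<forall>s\<in>{a..b}. norm (u s) \<le> \<rho>"
    using u unfolding admissible_on_def by blast
  have "continuous_on ({a..b} - (S \<union> {\<tau> - \<epsilon>, \<tau>})) (needle u \<tau> v \<epsilon>)"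
    by (rule continuous_on_needle[OF continuous_on_subset[OF S(2)]]) auto
  moreover have "finite (S \<union> {\<tau> - \<epsilon>, \<tau>})" using S(1) by simp
  moreover have "\<forall>s\<in>{a..b}. norm (needle u \<tau> v \<epsilon> s) \<le> \<rho>" using ub v by (simp add: needle_def)
  ultimately show ?thesis unfolding admissible_on_def by blast
qed

lemma needle_solution_diff_le:
  assumes u: "admissible_on a b u" and v: "norm v \<le> \<rho>" and \<epsilon>: "0 \<le> \<epsilon>" "a \<le> \<tau> - \<epsilon>" "\<tau> \<le> b"
    and s1: "integral_solution a b (needle u \<tau> v \<epsilon>) \<phi>" and s2: "integral_solution a b u \<psi>" and st: "\<phi> a = \<psi> a"
    and t: "t \<in> {a..b}"
  shows "norm (\<phi> t - \<psi> t) \<le> K1 * (2 * \<rho> * \<epsilon>) * exp (K1 * (b - a))"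
proof -
  define h where "h s = (if s \<in> {\<tau> - \<epsilon>..\<tau>} then 2 * \<rho> else 0)" for s
  have ub: "\<forall>s\<in>{a..b}. norm (u s) \<le> \<rho>" using u unfolding admissible_on_def by blast
  have eqI: "{\<tau> - \<epsilon>..\<tau>} \<inter> {a..b} = {\<tau> - \<epsilon>..\<tau>}" using \<epsilon> by auto
  have hi: "h integrable_on {a..b}"
    unfolding h_def integrable_restrict_Int eqI by (rule integrable_const_ivl)
  have hI: "integral {a..b} h = 2 * \<rho> * \<epsilon>"
    unfolding h_def integral_restrict_Int eqI using \<epsilon> by simp
  have hb: "norm (needle u \<tau> v \<epsilon> s - u s) \<le> h s" if s: "s \<in> {a..b}" for s
  proof (cases "s \<in> {\<tau> - \<epsilon><..\<tau>}")
    case True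
    have "norm (v - u s) \<le> norm v + norm (u s)" by (rule norm_triangle_ineq4)
    also have "\<dots> \<le> 2 * \<rho>" using v ub[rule_format, OF s] by linarith
    finally show ?thesis using True by (simp add: needle_def h_def)
  next
    case False
    then show ?thesis using rho by (simp add: needle_def h_def)
  qed
  have "norm (\<phi> t - \<psi> t) \<le> K1 * (2 * \<rho> * \<epsilon>) * exp (K1 * (t - a))"
    using integral_solution_diff_le[OF admissible_on_needle[OF u v] u s1 s2 hi hb _ t, of "2 * \<rho> * \<epsilon>"] hI st by simp
  also have "\<dots> \<le> K1 * (2 * \<rho> * \<epsilon>) * exp (K1 * (b - a))"
    using K1 rho \<epsilon> t by (intro mult_left_mono) (auto intro: mult_left_mono)
  finally show ?thesis .
qed

lemma ode_sol_lipschitz_initial: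
  assumes w: "admissible_on a b w" and ab: "a \<le> b"
  shows "norm (ode_sol f w a b z t - ode_sol f w a b z' t) \<le> exp (K1 * (b - a)) * norm (z - z')"
proof (cases "t \<in> {a..b}")
  case True
  have s: "integral_solution a b w (ode_sol f w a b z)" "ode_sol f w a b z a = z" and
       s': "integral_solution a b w (ode_sol f w a b z')" "ode_sol f w a b z' a = z'"
    using ode_sol_integral_solution[OF w ab, where z=z] ode_sol_integral_solution[OF w ab, where z=z'] by auto
  have "norm (ode_sol f w a b z t - ode_sol f w a b z' t) \<le> (norm (z - z') + K1 * 0) * exp (K1 * (t - a))"
    using integral_solution_diff_le[OF w w s(1) s'(1), of "\<lambda>_. 0" 0 t] True s(2) s'(2) by auto
  also have "\<dots> \<le> norm (z - z') * exp (K1 * (b - a))"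
  proof -
    have "K1 * (t - a) \<le> K1 * (b - a)" using True K1 by (intro mult_left_mono) auto
    then show ?thesis by (simp add: mult_left_mono)
  qed
  finally show ?thesis by (simp add: mult.commute)
next
  case False
  then have "ode_sol f w a b z t = z" "ode_sol f w a b z' t = z'"
    using ode_sol_integral_solution[OF w ab, where z=z] ode_sol_integral_solution[OF w ab, where z=z'] by auto
  moreover have "1 \<le> exp (K1 * (b - a))" using K1 ab by simp
  ultimately show ?thesis by (simp add: mult_le_cancel_right1 order_trans[OF _ mult_right_mono[of 1]])
qed

lemma continuous_on_ode_sol_initial:
  assumes w: "admissible_on a b w" and ab: "a \<le> b"
  shows "continuous_on UNIV (\<lambda>z. ode_sol f w a b z t)"
proof (rule lipschitz_on_continuous_on)
  show "lipschitz_on (exp (K1 * (b - a))) UNIV (\<lambda>z. ode_sol f w a b z t)"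
    by (rule lipschitz_onI) (use ode_sol_lipschitz_initial[OF w ab] in \<open>auto simp: dist_norm\<close>)
qed

subsection \<open>Variation of the state under a needle perturbation\<close>

lemma linearization_error_le:
  fixes A :: "real \<Rightarrow> 'x \<Rightarrow>\<^sub>L 'x"
  assumes u: "admissible_on a b u"
    and \<phi>: "integral_solution a b u \<phi>" and \<psi>: "integral_solution a b u \<psi>"
    and \<Psi>: "continuous_on {a..b} \<Psi>" "\<And>t. t \<in> {a..b} \<Longrightarrow> \<Psi> t = \<Psi> a + integral {a..t} (\<lambda>s. A s (\<Psi> s))"
    and A_int: "(\<lambda>s. A s (\<Psi> s)) integrable_on {a..b}"
    and B: "0 \<le> B" "\<And>s. s \<in> {a..b} \<Longrightarrow> norm (A s) \<le> B"
    and remainder: "\<And>s. s \<in> {a..b} \<Longrightarrow> norm (f (\<psi> s) (u s) - f (\<phi> s) (u s) - A s (\<psi> s - \<phi> s)) \<le> \<eta>"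
    and t: "t \<in> {a..b}"
  shows "norm (\<psi> t - \<phi> t - \<epsilon> *\<^sub>R \<Psi> t) \<le> (norm (\<psi> a - \<phi> a - \<epsilon> *\<^sub>R \<Psi> a) + \<eta> * (b - a)) * exp (B * (t - a))"
proof (rule gronwall_integral_equation
    [where G = "\<lambda>s. f (\<psi> s) (u s) - f (\<phi> s) (u s) - \<epsilon> *\<^sub>R A s (\<Psi> s)" and h = "\<lambda>_. \<eta>", OF _ _ _ _ _ _ B(1) _ t])
  have \<phi>_cont: "continuous_on {a..b} \<phi>" and \<psi>_cont: "continuous_on {a..b} \<psi>"
    using \<phi> \<psi> by (auto intro: integral_solution_continuous)
  have int_\<psi>: "(\<lambda>s. f (\<psi> s) (u s)) integrable_on {a..t'}"
    and int_\<phi>: "(\<lambda>s. f (\<phi> s) (u s)) integrable_on {a..t'}"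
    and int_A: "(\<lambda>s. A s (\<Psi> s)) integrable_on {a..t'}" if "t' \<in> {a..b}" for t'
    using integrable_on_f_comp[OF u \<psi>_cont] integrable_on_f_comp[OF u \<phi>_cont]
      integrable_on_subinterval[OF A_int] that by auto
  show "continuous_on {a..b} (\<lambda>s. \<psi> s - \<phi> s - \<epsilon> *\<^sub>R \<Psi> s)" by (intro continuous_intros \<phi>_cont \<psi>_cont \<Psi>(1))
  show "\<psi> t' - \<phi> t' - \<epsilon> *\<^sub>R \<Psi> t' = \<psi> a - \<phi> a - \<epsilon> *\<^sub>R \<Psi> a
      + integral {a..t'} (\<lambda>s. f (\<psi> s) (u s) - f (\<phi> s) (u s) - \<epsilon> *\<^sub>R A s (\<Psi> s))" if t': "t' \<in> {a..b}" for t'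
  proof -
    have "integral {a..t'} (\<lambda>s. f (\<psi> s) (u s) - f (\<phi> s) (u s) - \<epsilon> *\<^sub>R A s (\<Psi> s))
        = integral {a..t'} (\<lambda>s. f (\<psi> s) (u s)) - integral {a..t'} (\<lambda>s. f (\<phi> s) (u s))
          - \<epsilon> *\<^sub>R integral {a..t'} (\<lambda>s. A s (\<Psi> s))"
      using int_\<psi>[OF t'] int_\<phi>[OF t'] int_A[OF t']
      by (simp only: integral_diff integrable_diff integrable_cmul integral_cmul)
    then show ?thesis
      using integral_solution_eq[OF \<psi> t'] integral_solution_eq[OF \<phi> t'] \<Psi>(2)[OF t']
      by (simp add: algebra_simps)
  qed
  show "(\<lambda>s. f (\<psi> s) (u s) - f (\<phi> s) (u s) - \<epsilon> *\<^sub>R A s (\<Psi> s)) integrable_on {a..b}"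
    using int_\<psi>[of b] int_\<phi>[of b] int_A[of b] t by (auto intro!: integrable_diff integrable_cmul)
  fix s assume s: "s \<in> {a..b}"
  show "0 \<le> \<eta>" using remainder[OF s] by (rule order_trans[OF norm_ge_zero])
  have "f (\<psi> s) (u s) - f (\<phi> s) (u s) - \<epsilon> *\<^sub>R A s (\<Psi> s)
      = (f (\<psi> s) (u s) - f (\<phi> s) (u s) - A s (\<psi> s - \<phi> s)) + A s (\<psi> s - \<phi> s - \<epsilon> *\<^sub>R \<Psi> s)"
    by (simp add: blinfun.diff_right blinfun.scaleR_right)
  also have "norm \<dots> \<le> \<eta> + norm (A s) * norm (\<psi> s - \<phi> s - \<epsilon> *\<^sub>R \<Psi> s)"
    by (rule norm_triangle_le[OF add_mono[OF remainder[OF s] norm_blinfun]])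
  also have "\<dots> \<le> \<eta> + B * norm (\<psi> s - \<phi> s - \<epsilon> *\<^sub>R \<Psi> s)"
    using B(2)[OF s] by (simp add: mult_right_mono)
  finally show "norm (f (\<psi> s) (u s) - f (\<phi> s) (u s) - \<epsilon> *\<^sub>R A s (\<Psi> s))
      \<le> \<eta> + B * norm (\<psi> s - \<phi> s - \<epsilon> *\<^sub>R \<Psi> s)" .
qed (use t in auto)

lemma solution_family_has_vector_derivative:
  fixes A :: "real \<Rightarrow> 'x \<Rightarrow>\<^sub>L 'x"
  assumes ab: "a \<le> b" and e0: "0 < e0" and u: "admissible_on a b u"
    and sol: "\<And>\<epsilon>. \<epsilon> \<in> {0..e0} \<Longrightarrow> integral_solution a b u (\<phi> \<epsilon>)"
    and lipschitz: "\<And>\<epsilon> t. \<epsilon> \<in> {0..e0} \<Longrightarrow> t \<in> {a..b} \<Longrightarrow> norm (\<phi> \<epsilon> t - \<phi> 0 t) \<le> C * \<epsilon>"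
    and start: "((\<lambda>\<epsilon>. \<phi> \<epsilon> a) has_vector_derivative \<Psi> a) (at 0 within {0..e0})"
    and \<Psi>: "continuous_on {a..b} \<Psi>" "\<And>t. t \<in> {a..b} \<Longrightarrow> \<Psi> t = \<Psi> a + integral {a..t} (\<lambda>s. A s (\<Psi> s))"
    and A_int: "(\<lambda>s. A s (\<Psi> s)) integrable_on {a..b}"
    and B: "0 \<le> B" "\<And>s. s \<in> {a..b} \<Longrightarrow> norm (A s) \<le> B"
    and linearization: "\<And>\<eta>. \<eta> > 0 \<Longrightarrow> \<exists>r>0. \<forall>s\<in>{a..b}. \<forall>x. norm (x - \<phi> 0 s) < r \<longrightarrow>
           norm (f x (u s) - f (\<phi> 0 s) (u s) - A s (x - \<phi> 0 s)) \<le> \<eta> * norm (x - \<phi> 0 s)"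
    and t: "t \<in> {a..b}"
  shows "((\<lambda>\<epsilon>. \<phi> \<epsilon> t) has_vector_derivative \<Psi> t) (at 0 within {0..e0})"
  unfolding has_vector_derivative_within_iff_le diff_zero
proof (intro allI impI)
  fix \<delta> :: real assume \<delta>: "\<delta> > 0"
  have sol0: "integral_solution a b u (\<phi> 0)" using sol[of 0] e0 by simp
  have "0 \<le> C * e0"
    using lipschitz[of e0 a] e0 ab by (meson atLeastAtMost_iff less_eq_real_def norm_ge_zero order_trans)
  then have C: "0 \<le> C" using e0 by (simp add: zero_le_mult_iff)
  define M where "M = (1 + C * (b - a)) * exp (B * (b - a))"
  have "1 \<le> 1 + C * (b - a)" "1 \<le> exp (B * (b - a))" using C B(1) ab by simp_all
  then have M: "M \<ge> 1" unfolding M_def by (metis mult_mono' mult_1 zero_le_one)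
  define \<eta> where "\<eta> = \<delta> / M"
  have \<eta>: "\<eta> > 0" using \<delta> M by (simp add: \<eta>_def)
  obtain r where r: "r > 0" and lin_r: "\<And>s x. s \<in> {a..b} \<Longrightarrow> norm (x - \<phi> 0 s) < r \<Longrightarrow>
      norm (f x (u s) - f (\<phi> 0 s) (u s) - A s (x - \<phi> 0 s)) \<le> \<eta> * norm (x - \<phi> 0 s)"
    using linearization[OF \<eta>] by blast
  obtain d where d: "d > 0"
    and start_d: "\<And>y. y \<in> {0..e0} \<Longrightarrow> \<bar>y\<bar> < d \<Longrightarrow> norm (\<phi> y a - \<phi> 0 a - y *\<^sub>R \<Psi> a) \<le> \<eta> * \<bar>y\<bar>"
    using start[unfolded has_vector_derivative_within_iff_le diff_zero] \<eta> by blast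
  show "\<exists>d>0. \<forall>\<epsilon>\<in>{0..e0}. \<bar>\<epsilon>\<bar> < d \<longrightarrow> norm (\<phi> \<epsilon> t - \<phi> 0 t - \<epsilon> *\<^sub>R \<Psi> t) \<le> \<delta> * \<bar>\<epsilon>\<bar>"
  proof (intro exI[of _ "min d (r / (C + 1))"] conjI ballI impI)
    show "0 < min d (r / (C + 1))" using d r C by simp
    fix \<epsilon> assume \<epsilon>: "\<epsilon> \<in> {0..e0}" and small: "\<bar>\<epsilon>\<bar> < min d (r / (C + 1))"
    have \<epsilon>0: "0 \<le> \<epsilon>" using \<epsilon> by simp
    have "C * \<epsilon> \<le> (C + 1) * \<epsilon>" using \<epsilon>0 by (simp add: distrib_right)
    also have "\<dots> < r" using small C \<epsilon>0 by (simp add: field_simps)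
    finally have Cr: "C * \<epsilon> < r" .
    have exp_le: "exp (B * (t - a)) \<le> exp (B * (b - a))" using t B(1) by (auto intro: mult_left_mono)
    have "norm (\<phi> \<epsilon> t - \<phi> 0 t - \<epsilon> *\<^sub>R \<Psi> t)
        \<le> (norm (\<phi> \<epsilon> a - \<phi> 0 a - \<epsilon> *\<^sub>R \<Psi> a) + \<eta> * (C * \<epsilon>) * (b - a)) * exp (B * (t - a))"
    proof (rule linearization_error_le[OF u sol0 sol[OF \<epsilon>] \<Psi> A_int B _ t])
      fix s assume s: "s \<in> {a..b}"
      have "norm (\<phi> \<epsilon> s - \<phi> 0 s) < r" using lipschitz[OF \<epsilon> s] Cr by linarith
      from order_trans[OF lin_r[OF s this] mult_left_mono[OF lipschitz[OF \<epsilon> s]]]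
      show "norm (f (\<phi> \<epsilon> s) (u s) - f (\<phi> 0 s) (u s) - A s (\<phi> \<epsilon> s - \<phi> 0 s)) \<le> \<eta> * (C * \<epsilon>)"
        using \<eta> by simp
    qed
    also have "\<dots> \<le> (\<eta> * \<epsilon> + \<eta> * (C * \<epsilon>) * (b - a)) * exp (B * (b - a))"
      using start_d[OF \<epsilon>] small \<epsilon>0 t B(1) \<eta> C exp_le
      by (intro mult_mono add_right_mono) (auto intro!: mult_nonneg_nonneg add_nonneg_nonneg)
    also have "\<dots> = \<eta> * \<epsilon> * M" by (simp add: M_def algebra_simps)
    also have "\<dots> = \<delta> * \<bar>\<epsilon>\<bar>" using M \<epsilon>0 by (simp add: \<eta>_def)
    finally show "norm (\<phi> \<epsilon> t - \<phi> 0 t - \<epsilon> *\<^sub>R \<Psi> t) \<le> \<delta> * \<bar>\<epsilon>\<bar>" .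
  qed
qed

lemma needle_solutions_agree_before:
  assumes u: "admissible_on a b u" and v: "norm v \<le> \<rho>" and \<epsilon>: "0 \<le> \<epsilon>" "a \<le> \<tau> - \<epsilon>" "\<tau> \<le> b"
    and \<phi>: "integral_solution a b (needle u \<tau> v \<epsilon>) \<phi>" and \<psi>: "integral_solution a b u \<psi>"
    and start: "\<phi> a = \<psi> a"
  shows "\<phi> (\<tau> - \<epsilon>) = \<psi> (\<tau> - \<epsilon>)"
proof -
  have u': "admissible_on a (\<tau> - \<epsilon>) u"
    by (rule admissible_on_subinterval[OF u]) (use \<epsilon> in auto)
  have "integral_solution a (\<tau> - \<epsilon>) (needle u \<tau> v \<epsilon>) \<phi>"
    by (rule integral_solution_subinterval[OF admissible_on_needle[OF u v] \<phi>]) (use \<epsilon> in auto)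
  then have \<phi>': "integral_solution a (\<tau> - \<epsilon>) u \<phi>"
    using integral_solution_cong[of "{}" a "\<tau> - \<epsilon>" "needle u \<tau> v \<epsilon>" u \<phi>] by (simp add: needle_def)
  have \<psi>': "integral_solution a (\<tau> - \<epsilon>) u \<psi>"
    by (rule integral_solution_subinterval[OF u \<psi>]) (use \<epsilon> in auto)
  show ?thesis
    by (rule integral_solution_unique[OF u' \<phi>' \<psi>' start]) (use \<epsilon> in auto)
qed

lemma needle_increment_eq:
  assumes u: "admissible_on a b u" and v: "norm v \<le> \<rho>" and \<epsilon>: "0 \<le> \<epsilon>" "a \<le> \<tau> - \<epsilon>" "\<tau> \<le> b"
    and \<phi>: "integral_solution a b (needle u \<tau> v \<epsilon>) \<phi>" and \<psi>: "integral_solution a b u \<psi>"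
    and start: "\<phi> a = \<psi> a"
  shows "\<phi> \<tau> - \<psi> \<tau> = integral {\<tau> - \<epsilon>..\<tau>} (\<lambda>s. f (\<phi> s) v - f (\<psi> s) (u s))"
proof -
  have w: "admissible_on a b (needle u \<tau> v \<epsilon>)" by (rule admissible_on_needle[OF u v])
  have sub: "{\<tau> - \<epsilon>..\<tau>} \<subseteq> {a..b}" using \<epsilon> by auto
  have "integral_solution (\<tau> - \<epsilon>) \<tau> (needle u \<tau> v \<epsilon>) \<phi>" "integral_solution (\<tau> - \<epsilon>) \<tau> u \<psi>"
    using integral_solution_subinterval[OF w \<phi>] integral_solution_subinterval[OF u \<psi>] \<epsilon> by auto
  then have "\<phi> \<tau> = \<phi> (\<tau> - \<epsilon>) + integral {\<tau> - \<epsilon>..\<tau>} (\<lambda>s. f (\<phi> s) (needle u \<tau> v \<epsilon> s))"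
    and "\<psi> \<tau> = \<psi> (\<tau> - \<epsilon>) + integral {\<tau> - \<epsilon>..\<tau>} (\<lambda>s. f (\<psi> s) (u s))"
    using \<epsilon> by (auto intro: integral_solution_eq)
  moreover have "\<phi> (\<tau> - \<epsilon>) = \<psi> (\<tau> - \<epsilon>)"
    by (rule needle_solutions_agree_before[OF u v \<epsilon> \<phi> \<psi> start])
  moreover have "integral {\<tau> - \<epsilon>..\<tau>} (\<lambda>s. f (\<phi> s) (needle u \<tau> v \<epsilon> s)) - integral {\<tau> - \<epsilon>..\<tau>} (\<lambda>s. f (\<psi> s) (u s))
      = integral {\<tau> - \<epsilon>..\<tau>} (\<lambda>s. f (\<phi> s) (needle u \<tau> v \<epsilon> s) - f (\<psi> s) (u s))"
    using \<phi> \<psi> unfolding integral_solution_def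
    by (intro integral_diff[symmetric] integrable_on_f_comp[OF w _ sub] integrable_on_f_comp[OF u _ sub]) auto
  moreover have "\<dots> = integral {\<tau> - \<epsilon>..\<tau>} (\<lambda>s. f (\<phi> s) v - f (\<psi> s) (u s))"
    by (rule integral_spike[of "{\<tau> - \<epsilon>}"]) (auto simp: needle_def)
  ultimately show ?thesis by (simp add: algebra_simps)
qed

lemma needle_integrand_close:
  assumes u: "admissible_on a b u" and v: "norm v \<le> \<rho>" and a\<tau>: "a < \<tau>" "\<tau> \<le> b"
    and u_left: "continuous (at_left \<tau>) u"
    and sol: "\<And>\<epsilon>. \<epsilon> \<in> {0..\<tau> - a} \<Longrightarrow> integral_solution a b (needle u \<tau> v \<epsilon>) (\<phi> \<epsilon>)"
    and start: "\<And>\<epsilon>. \<epsilon> \<in> {0..\<tau> - a} \<Longrightarrow> \<phi> \<epsilon> a = \<phi> 0 a"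
    and \<delta>: "\<delta> > 0"
  obtains d where "d > 0" "\<And>\<epsilon> s. \<epsilon> \<in> {0..\<tau> - a} \<Longrightarrow> \<epsilon> < d \<Longrightarrow> s \<in> {\<tau> - \<epsilon>..\<tau>} \<Longrightarrow>
    norm (f (\<phi> \<epsilon> s) v - f (\<phi> 0 s) (u s) - (f (\<phi> 0 \<tau>) v - f (\<phi> 0 \<tau>) (u \<tau>))) \<le> \<delta>"
proof -
  have sol0: "integral_solution a b u (\<phi> 0)" using sol[of 0] a\<tau> by (simp add: needle_zero)
  define D where "D = K1 * (2 * \<rho>) * exp (K1 * (b - a))"
  have D: "0 \<le> D" unfolding D_def using K1 rho by simp
  have \<phi>_diff: "norm (\<phi> \<epsilon> s - \<phi> 0 s) \<le> D * \<epsilon>" if \<epsilon>: "\<epsilon> \<in> {0..\<tau> - a}" and s: "s \<in> {a..b}" for \<epsilon> s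
    using needle_solution_diff_le[OF u v _ _ a\<tau>(2) sol[OF \<epsilon>] sol0 start[OF \<epsilon>] s] \<epsilon>
    by (simp add: D_def mult_ac)
  define \<eta> where "\<eta> = \<delta> / (6 * (K1 + 1))"
  have \<eta>: "\<eta> > 0" using \<delta> K1 by (simp add: \<eta>_def)
  obtain d1 where d1: "d1 > 0" "\<And>s. s \<in> {a..b} \<Longrightarrow> dist s \<tau> < d1 \<Longrightarrow> dist (\<phi> 0 s) (\<phi> 0 \<tau>) < \<eta>"
    using sol0 \<eta> a\<tau> unfolding integral_solution_def continuous_on_iff
    by (metis atLeastAtMost_iff less_imp_le order_refl)
  have "\<forall>\<^sub>F s in at_left \<tau>. dist (u s) (u \<tau>) < \<eta>"
    using u_left \<eta> by (simp add: continuous_within tendstoD)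
  then obtain b1 where b1: "b1 < \<tau>" "\<And>s. b1 < s \<Longrightarrow> s < \<tau> \<Longrightarrow> dist (u s) (u \<tau>) < \<eta>"
    unfolding eventually_at_left_field by blast
  define d where "d = min (min d1 (\<tau> - b1)) (\<delta> / (2 * (K1 * D + 1)))"
  have KD: "0 < K1 * D + 1" using K1 D by (simp add: add_nonneg_pos)
  show ?thesis
  proof (rule that)
    show "d > 0" using d1 b1 \<delta> KD by (simp add: d_def)
    fix \<epsilon> s assume \<epsilon>: "\<epsilon> \<in> {0..\<tau> - a}" and small: "\<epsilon> < d" and s: "s \<in> {\<tau> - \<epsilon>..\<tau>}"
    have s_ab: "s \<in> {a..b}" using s \<epsilon> a\<tau> by auto
    have close_\<phi>: "norm (\<phi> 0 s - \<phi> 0 \<tau>) < \<eta>"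
      using d1(2)[OF s_ab] s small by (simp add: d_def dist_norm abs_real_def)
    have close_u: "norm (u s - u \<tau>) \<le> \<eta>"
      using b1(2)[of s] s small \<eta> by (cases "s = \<tau>") (auto simp: d_def dist_norm)
    have "norm (f (\<phi> \<epsilon> s) v - f (\<phi> 0 s) (u s) - (f (\<phi> 0 \<tau>) v - f (\<phi> 0 \<tau>) (u \<tau>)))
        \<le> norm (f (\<phi> \<epsilon> s) v - f (\<phi> 0 \<tau>) v) + norm (f (\<phi> 0 s) (u s) - f (\<phi> 0 \<tau>) (u \<tau>))"
      by (rule order_trans[OF _ norm_triangle_ineq4]) (simp add: algebra_simps)
    also have "\<dots> \<le> K1 * norm (\<phi> \<epsilon> s - \<phi> 0 \<tau>) + K1 * (norm (\<phi> 0 s - \<phi> 0 \<tau>) + norm (u s - u \<tau>))"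
      using f_lipschitz_state[OF v] f_lipschitz admissible_on_bound[OF u] s_ab a\<tau> by (intro add_mono) auto
    also have "\<dots> \<le> K1 * (D * \<epsilon> + \<eta>) + K1 * (\<eta> + \<eta>)"
      using norm_triangle_ineq[of "\<phi> \<epsilon> s - \<phi> 0 s" "\<phi> 0 s - \<phi> 0 \<tau>"] \<phi>_diff[OF \<epsilon> s_ab] close_\<phi> close_u K1
      by (intro add_mono mult_left_mono) auto
    also have "\<dots> = K1 * D * \<epsilon> + 3 * K1 * \<eta>" by (simp add: algebra_simps)
    also have "K1 * D * \<epsilon> \<le> \<delta> / 2"
    proof -
      have "K1 * D * \<epsilon> \<le> (K1 * D + 1) * \<epsilon>" using \<epsilon> by (simp add: distrib_right)
      also have "\<dots> \<le> (K1 * D + 1) * (\<delta> / (2 * (K1 * D + 1)))"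
        using small \<epsilon> KD unfolding d_def by (intro mult_left_mono) auto
      also have "\<dots> = \<delta> / 2" using KD by (simp add: field_simps)
      finally show ?thesis .
    qed
    also have "3 * K1 * \<eta> \<le> \<delta> / 2"
      using K1 \<delta> unfolding \<eta>_def by (simp add: field_simps)
    finally show "norm (f (\<phi> \<epsilon> s) v - f (\<phi> 0 s) (u s) - (f (\<phi> 0 \<tau>) v - f (\<phi> 0 \<tau>) (u \<tau>))) \<le> \<delta>"
      by simp
  qed
qed

lemma needle_has_vector_derivative:
  assumes u: "admissible_on a b u" and v: "norm v \<le> \<rho>" and a\<tau>: "a < \<tau>" "\<tau> \<le> b"
    and u_left: "continuous (at_left \<tau>) u"
    and sol: "\<And>\<epsilon>. \<epsilon> \<in> {0..\<tau> - a} \<Longrightarrow> integral_solution a b (needle u \<tau> v \<epsilon>) (\<phi> \<epsilon>)"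
    and start: "\<And>\<epsilon>. \<epsilon> \<in> {0..\<tau> - a} \<Longrightarrow> \<phi> \<epsilon> a = \<phi> 0 a"
  shows "((\<lambda>\<epsilon>. \<phi> \<epsilon> \<tau>) has_vector_derivative (f (\<phi> 0 \<tau>) v - f (\<phi> 0 \<tau>) (u \<tau>))) (at 0 within {0..\<tau> - a})"
  unfolding has_vector_derivative_within_iff_le diff_zero
proof (intro allI impI)
  fix \<delta> :: real assume \<delta>: "\<delta> > 0"
  define c where "c = f (\<phi> 0 \<tau>) v - f (\<phi> 0 \<tau>) (u \<tau>)"
  have sol0: "integral_solution a b u (\<phi> 0)" using sol[of 0] a\<tau> by (simp add: needle_zero)
  obtain d where d: "d > 0" and close: "\<And>\<epsilon> s. \<epsilon> \<in> {0..\<tau> - a} \<Longrightarrow> \<epsilon> < d \<Longrightarrow> s \<in> {\<tau> - \<epsilon>..\<tau>} \<Longrightarrow>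
      norm (f (\<phi> \<epsilon> s) v - f (\<phi> 0 s) (u s) - c) \<le> \<delta>"
    using needle_integrand_close[OF assms \<delta>] unfolding c_def by blast
  show "\<exists>d>0. \<forall>\<epsilon>\<in>{0..\<tau> - a}. \<bar>\<epsilon>\<bar> < d \<longrightarrow> norm (\<phi> \<epsilon> \<tau> - \<phi> 0 \<tau> - \<epsilon> *\<^sub>R c) \<le> \<delta> * \<bar>\<epsilon>\<bar>"
  proof (intro exI[of _ d] conjI ballI impI d)
    fix \<epsilon> assume \<epsilon>: "\<epsilon> \<in> {0..\<tau> - a}" and small: "\<bar>\<epsilon>\<bar> < d"
    have \<epsilon>0: "0 \<le> \<epsilon>" using \<epsilon> by simp
    have sub: "{\<tau> - \<epsilon>..\<tau>} \<subseteq> {a..b}" using \<epsilon> a\<tau> by auto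
    have "(\<lambda>s. f (\<phi> \<epsilon> s) v) integrable_on {\<tau> - \<epsilon>..\<tau>}"
      using integral_solution_continuous[OF sol[OF \<epsilon>]]
      by (intro integrable_continuous_interval continuous_on_f_comp continuous_on_const continuous_on_subset[OF _ sub])
    moreover have "(\<lambda>s. f (\<phi> 0 s) (u s)) integrable_on {\<tau> - \<epsilon>..\<tau>}"
      by (rule integrable_on_f_comp[OF u integral_solution_continuous[OF sol0] sub])
    ultimately have int: "(\<lambda>s. f (\<phi> \<epsilon> s) v - f (\<phi> 0 s) (u s)) integrable_on {\<tau> - \<epsilon>..\<tau>}"
      by (rule integrable_diff)
    have "\<phi> \<epsilon> \<tau> - \<phi> 0 \<tau> - \<epsilon> *\<^sub>R c = integral {\<tau> - \<epsilon>..\<tau>} (\<lambda>s. f (\<phi> \<epsilon> s) v - f (\<phi> 0 s) (u s) - c)"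
      using needle_increment_eq[OF u v \<epsilon>0 _ a\<tau>(2) sol[OF \<epsilon>] sol0 start[OF \<epsilon>]] \<epsilon>
      by (simp add: integral_diff[OF int integrable_const_ivl])
    also have "norm \<dots> \<le> integral {\<tau> - \<epsilon>..\<tau>} (\<lambda>_. \<delta>)"
      using close[OF \<epsilon>] small
      by (intro integral_norm_bound_integral integrable_diff int integrable_const_ivl) auto
    finally show "norm (\<phi> \<epsilon> \<tau> - \<phi> 0 \<tau> - \<epsilon> *\<^sub>R c) \<le> \<delta> * \<bar>\<epsilon>\<bar>" using \<epsilon>0 by (simp add: mult.commute)
  qed
qed

end

definition embed_fst_blinfun :: "'a::real_normed_vector \<Rightarrow>\<^sub>L ('a \<times> 'b::real_normed_vector)"
  where "embed_fst_blinfun = Blinfun (\<lambda>h. (h, 0))"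

lemma embed_fst_blinfun_apply [simp]: "embed_fst_blinfun h = (h, 0)"
  unfolding embed_fst_blinfun_def
  by (simp add: bounded_linear_Blinfun_apply bounded_linear_Pair bounded_linear_ident)

lemma norm_embed_fst_blinfun_le: "norm (embed_fst_blinfun :: 'a::real_normed_vector \<Rightarrow>\<^sub>L ('a \<times> 'b::real_normed_vector)) \<le> 1"
  by (rule norm_blinfun_bound) (simp_all add: norm_Pair)

locale differentiable_control_system = lipschitz_control_system f \<rho> K1
  for f :: "'x::euclidean_space \<Rightarrow> 'm::euclidean_space \<Rightarrow> 'x" and \<rho> K1 +
  fixes f' :: "'x \<times> 'm \<Rightarrow> ('x \<times> 'm) \<Rightarrow>\<^sub>L 'x"
  assumes f_derivative: "\<And>z. ((\<lambda>(x, w). f x w) has_derivative blinfun_apply (f' z)) (at z)"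
    and continuous_f': "continuous_on UNIV f'"
begin

lemma f_uniform_linearization:
  assumes R: "0 \<le> R" and e: "e > 0"
  shows "\<exists>r>0. \<forall>x x' m. norm x \<le> R \<longrightarrow> norm (x' - x) < r \<longrightarrow> norm m \<le> \<rho> \<longrightarrow>
           norm (f x' m - f x m - f' (x, m) (x' - x, 0)) \<le> e * norm (x' - x)"
proof -
  define Kc where "Kc = cball (0::'x) (R + 1) \<times> cball (0::'m) \<rho>"
  have "uniformly_continuous_on Kc f'"
    unfolding Kc_def by (intro compact_uniformly_continuous continuous_on_subset[OF continuous_f'] compact_Times) auto
  then obtain r where r: "r > 0" "\<And>p q. p \<in> Kc \<Longrightarrow> q \<in> Kc \<Longrightarrow> dist q p < r \<Longrightarrow> dist (f' q) (f' p) < e"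
    using e unfolding uniformly_continuous_on_def by metis
  show ?thesis
  proof (intro exI[of _ "min r 1"] conjI allI impI)
    show "min r 1 > 0" using r by simp
    fix x x' :: 'x and m :: 'm
    assume x: "norm x \<le> R" and xx: "norm (x' - x) < min r 1" and m: "norm m \<le> \<rho>"
    define S where "S = closed_segment (x, m) (x', m)"
    have "norm x' \<le> norm x + norm (x' - x)" using norm_triangle_ineq[of x "x' - x"] by simp
    then have "(x, m) \<in> Kc" "(x', m) \<in> Kc" using x xx m by (auto simp: Kc_def)
    then have S_Kc: "S \<subseteq> Kc" unfolding S_def Kc_def by (intro closed_segment_subset convex_Times) auto
    have S_close: "dist z (x, m) < r" if "z \<in> S" for z
      using dist_in_closed_segment[OF that[unfolded S_def]] xx
      by (simp add: dist_norm norm_Pair norm_minus_commute)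
    have "norm ((\<lambda>(x, w). f x w) (x', m) - (\<lambda>(x, w). f x w) (x, m) - f' (x, m) ((x', m) - (x, m)))
        \<le> norm ((x', m) - (x, m)) * e"
    proof (rule differentiable_bound_linearization[of "(x, m)" "(x', m)" S _ "\<lambda>z. blinfun_apply (f' z)"])
      show "(x, m) + t *\<^sub>R ((x', m) - (x, m)) \<in> S" if "t \<in> {0..1}" for t
        unfolding S_def closed_segment_def using that
        by (intro CollectI exI[of _ t]) (auto simp: algebra_simps)
      show "((\<lambda>(x, w). f x w) has_derivative blinfun_apply (f' z)) (at z within S)" for z
        by (rule has_derivative_at_withinI[OF f_derivative])
      show "onorm (blinfun_apply (f' z) - blinfun_apply (f' (x, m))) \<le> e" if "z \<in> S" for z
      proof -
        have "blinfun_apply (f' z) - blinfun_apply (f' (x, m)) = blinfun_apply (f' z - f' (x, m))"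
          by (rule ext) (simp add: minus_blinfun.rep_eq)
        then show ?thesis
          using r(2)[OF \<open>(x, m) \<in> Kc\<close>, of z] S_Kc S_close[OF that] that
          by (auto simp: dist_norm norm_blinfun.rep_eq)
      qed
    qed (simp add: S_def)
    then show "norm (f x' m - f x m - f' (x, m) (x' - x, 0)) \<le> e * norm (x' - x)"
      by (simp add: norm_Pair mult.commute)
  qed
qed

lemma solution_family_differentiable:
  assumes ab: "a \<le> b" and e0: "0 < e0" and u: "admissible_on a b u"
    and sol: "\<And>\<epsilon>. \<epsilon> \<in> {0..e0} \<Longrightarrow> integral_solution a b u (\<phi> \<epsilon>)"
    and lipschitz: "\<And>\<epsilon> t. \<epsilon> \<in> {0..e0} \<Longrightarrow> t \<in> {a..b} \<Longrightarrow> norm (\<phi> \<epsilon> t - \<phi> 0 t) \<le> C * \<epsilon>"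
    and start: "((\<lambda>\<epsilon>. \<phi> \<epsilon> a) has_vector_derivative L) (at 0 within {0..e0})"
  shows "\<exists>\<Psi>. \<forall>t\<in>{a..b}. ((\<lambda>\<epsilon>. \<phi> \<epsilon> t) has_vector_derivative \<Psi> t) (at 0 within {0..e0})"
proof -
  obtain S where S: "finite S" "continuous_on ({a..b} - S) u"
    using u unfolding admissible_on_def by blast
  have \<phi>0_cont: "continuous_on {a..b} (\<phi> 0)"
    using sol[of 0] e0 unfolding integral_solution_def by simp
  obtain R where R: "0 < R" "\<forall>x \<in> \<phi> 0 ` {a..b}. norm x \<le> R"
    using compact_imp_bounded[OF compact_continuous_image[OF \<phi>0_cont compact_Icc]]
    unfolding bounded_pos by blast
  obtain B where B: "0 < B" "\<forall>x \<in> f' ` (cball 0 R \<times> cball 0 \<rho>). norm x \<le> B"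
    using compact_imp_bounded[OF compact_continuous_image[OF continuous_on_subset[OF continuous_f']
          compact_Times[OF compact_cball compact_cball]]]
    unfolding bounded_pos by blast
  define A where "A s = f' (\<phi> 0 s, u s) o\<^sub>L embed_fst_blinfun" for s
  have A_bound: "norm (A s) \<le> B" if s: "s \<in> {a..b}" for s
  proof -
    have "norm (A s) \<le> norm (f' (\<phi> 0 s, u s)) * 1"
      unfolding A_def
      by (rule order_trans[OF norm_blinfun_compose mult_left_mono[OF norm_embed_fst_blinfun_le]]) simp
    also have "\<dots> \<le> B" using B(2) R(2) admissible_on_bound[OF u s] s by simp
    finally show ?thesis .
  qed
  have A_cont: "continuous_on ({a..b} - S) A"
    unfolding A_def
    by (intro continuous_intros continuous_on_compose2[OF continuous_f'] continuous_on_subset[OF \<phi>0_cont] S(2))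
       auto
  obtain \<Psi> where \<Psi>: "continuous_on {a..b} \<Psi>" "\<forall>t\<in>{a..b}. \<Psi> t = L + integral {a..t} (\<lambda>s. A s (\<Psi> s))"
    using linear_integral_equation_solvable[OF ab S(1) A_cont A_bound] by blast
  have \<Psi>_start: "\<Psi> a = L" using \<Psi>(2) ab by auto
  have "((\<lambda>\<epsilon>. \<phi> \<epsilon> t) has_vector_derivative \<Psi> t) (at 0 within {0..e0})" if t: "t \<in> {a..b}" for t
  proof (rule solution_family_has_vector_derivative[OF ab e0 u sol lipschitz _ \<Psi>(1) _ _ less_imp_le[OF B(1)]
        A_bound _ t])
    show "((\<lambda>\<epsilon>. \<phi> \<epsilon> a) has_vector_derivative \<Psi> a) (at 0 within {0..e0})"
      using start \<Psi>_start by simp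
    show "\<Psi> t = \<Psi> a + integral {a..t} (\<lambda>s. A s (\<Psi> s))" if "t \<in> {a..b}" for t
      using \<Psi>(2) that \<Psi>_start by simp
    show "(\<lambda>s. A s (\<Psi> s)) integrable_on {a..b}"
      by (rule integrable_blinfun_apply_off_finite[OF S(1) A_cont A_bound \<Psi>(1)])
    fix \<eta> :: real assume "\<eta> > 0"
    from f_uniform_linearization[OF less_imp_le[OF R(1)] this] obtain r where "r > 0"
      and lin: "\<And>x x' m. norm x \<le> R \<Longrightarrow> norm (x' - x) < r \<Longrightarrow> norm m \<le> \<rho> \<Longrightarrow>
             norm (f x' m - f x m - f' (x, m) (x' - x, 0)) \<le> \<eta> * norm (x' - x)"
      by blast
    show "\<exists>r>0. \<forall>s\<in>{a..b}. \<forall>x. norm (x - \<phi> 0 s) < r \<longrightarrow>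
        norm (f x (u s) - f (\<phi> 0 s) (u s) - A s (x - \<phi> 0 s)) \<le> \<eta> * norm (x - \<phi> 0 s)"
    proof (intro exI[of _ r] conjI ballI allI impI \<open>r > 0\<close>)
      fix s x assume "s \<in> {a..b}" "norm (x - \<phi> 0 s) < r"
      then show "norm (f x (u s) - f (\<phi> 0 s) (u s) - A s (x - \<phi> 0 s)) \<le> \<eta> * norm (x - \<phi> 0 s)"
        using lin[OF R(2)[rule_format, OF imageI] _ admissible_on_bound[OF u]] by (simp add: A_def)
    qed
  qed
  then show ?thesis by blast
qed

end

section \<open>The hybrid trajectory\<close>

definition poly_growth :: "real \<Rightarrow> real \<Rightarrow> real \<Rightarrow> real \<Rightarrow> nat \<Rightarrow> nat \<Rightarrow> real \<Rightarrow> real \<Rightarrow> real" where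
  "poly_growth K2 K3 K4 K5 L1 L2 r q = K2 + K3 * r ^ L1 + K4 * q ^ L2 + K5 * r ^ L1 * q ^ L2"

lemma poly_growth_mono:
  assumes "0 \<le> K3" "0 \<le> K4" "0 \<le> K5" "0 \<le> r" "r \<le> r'" "0 \<le> q" "q \<le> q'"
  shows "poly_growth K2 K3 K4 K5 L1 L2 r q \<le> poly_growth K2 K3 K4 K5 L1 L2 r' q'"
proof -
  have "r ^ L1 \<le> r' ^ L1" "q ^ L2 \<le> q' ^ L2" using assms by (auto intro: power_mono)
  moreover from this have "r ^ L1 * q ^ L2 \<le> r' ^ L1 * q' ^ L2" using assms by (intro mult_mono) auto
  ultimately show ?thesis
    unfolding poly_growth_def mult.assoc using assms by (intro add_mono mult_left_mono) auto
qed

lemma poly_growth_nonneg: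
  "0 \<le> K2 \<Longrightarrow> 0 \<le> K3 \<Longrightarrow> 0 \<le> K4 \<Longrightarrow> 0 \<le> K5 \<Longrightarrow> 0 \<le> r \<Longrightarrow> 0 \<le> q \<Longrightarrow> 0 \<le> poly_growth K2 K3 K4 K5 L1 L2 r q"
  unfolding poly_growth_def by simp

locale hybrid_system = differentiable_control_system f \<rho> K1 f'
  for f :: "'x::euclidean_space \<Rightarrow> 'm::euclidean_space \<Rightarrow> 'x" and \<rho> K1 f' +
  fixes g :: "'x \<Rightarrow> 'y::euclidean_space \<Rightarrow> 'x" and Dg :: "'x \<Rightarrow> 'y \<Rightarrow> 'x \<Rightarrow>\<^sub>L 'x"
    and T :: nat and \<tau> :: real and v :: 'm and u :: "real \<Rightarrow> 'm" and x0 :: 'x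
    and K2 K3 K4 K5 :: real and L1 L2 :: nat
  assumes T: "T \<ge> 1" and tau: "0 < \<tau>" "\<tau> < 1" and v: "norm v \<le> \<rho>"
    and u: "admissible_on 0 T u" and u_left: "continuous (at_left \<tau>) u"
    and g_cont: "continuous_on UNIV (\<lambda>(x, y). g x y)"
    and g_deriv: "\<And>x y. ((\<lambda>x. g x y) has_derivative blinfun_apply (Dg x y)) (at x)"
    and K25: "K2 \<ge> 0" "K3 \<ge> 0" "K4 \<ge> 0" "K5 \<ge> 0"
    and g_bound: "\<And>x y. norm (g x y) \<le> poly_growth K2 K3 K4 K5 L1 L2 (norm x) (norm y)"
    and Dg_bound: "\<And>x y. norm (Dg x y) \<le> poly_growth K2 K3 K4 K5 L1 L2 (norm x) (norm y)"
begin

abbreviation "ctl \<epsilon> \<equiv> needle u \<tau> v \<epsilon>"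
abbreviation "start \<epsilon> ys i \<equiv> hyb_start f g (ctl \<epsilon>) ys x0 i"
abbreviation "seg \<epsilon> ys i \<equiv> hyb_seg f g (ctl \<epsilon>) ys x0 i"
abbreviation "traj \<epsilon> ys t \<equiv> hyb_traj f g T (ctl \<epsilon>) ys x0 t"
abbreviation "G r q \<equiv> poly_growth K2 K3 K4 K5 L1 L2 r q"

lemma G_mono: "0 \<le> r \<Longrightarrow> r \<le> r' \<Longrightarrow> 0 \<le> q \<Longrightarrow> q \<le> q' \<Longrightarrow> G r q \<le> G r' q'"
  by (rule poly_growth_mono) (use K25 in auto)

lemma G_nonneg: "0 \<le> r \<Longrightarrow> 0 \<le> q \<Longrightarrow> 0 \<le> G r q"
  by (rule poly_growth_nonneg) (use K25 in auto)

lemma one_le_exp_K1: "1 \<le> exp K1"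
  using K1 by simp

lemma admissible_on_ctl: "admissible_on 0 T (ctl \<epsilon>)"
  by (rule admissible_on_needle[OF u v])

lemma admissible_on_ctl_segment: "j < T \<Longrightarrow> admissible_on (real j) (real j + 1) (ctl \<epsilon>)"
  by (rule admissible_on_subinterval[OF admissible_on_ctl]) auto

lemma ctl_eq_after_one: "1 \<le> s \<Longrightarrow> 0 \<le> \<epsilon> \<Longrightarrow> ctl \<epsilon> s = u s"
  using tau by (simp add: needle_def)

lemma seg_eq_ode_sol: "seg \<epsilon> ys (Suc j) = ode_sol f (ctl \<epsilon>) (real j) (real j + 1) (start \<epsilon> ys (Suc j))"
  by (simp add: hyb_seg_def add.commute)

lemma seg_integral_solution:
  assumes "j < T"
  shows "integral_solution (real j) (real j + 1) (ctl \<epsilon>) (seg \<epsilon> ys (Suc j))"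
    and "seg \<epsilon> ys (Suc j) (real j) = start \<epsilon> ys (Suc j)"
  using ode_sol_integral_solution[OF admissible_on_ctl_segment[OF assms]] unfolding seg_eq_ode_sol by auto

lemma start_Suc_Suc: "start \<epsilon> ys (Suc (Suc j)) = g (seg \<epsilon> ys (Suc j) (real j + 1)) (ys (Suc j))"
  by (simp add: hyb_seg_def add.commute)

lemma traj_eq_seg:
  assumes "j < T" "real j \<le> t" "t < real j + 1"
  shows "traj \<epsilon> ys t = seg \<epsilon> ys (Suc j) t"
proof -
  have "\<lfloor>t\<rfloor> = int j" using assms by (intro floor_unique) auto
  then show ?thesis using assms unfolding hyb_traj_def by auto
qed

lemma traj_final: "traj \<epsilon> ys (real T) = start \<epsilon> ys (Suc T)"
  using T by (cases T) (auto simp: hyb_traj_def hyb_seg_def add.commute)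

lemma traj_cases:
  assumes t: "t \<in> {0..real T}" "t \<noteq> real T"
  obtains j where "j < T" "real j \<le> t" "t < real j + 1" "\<And>\<epsilon>. traj \<epsilon> ys t = seg \<epsilon> ys (Suc j) t"
proof -
  define j where "j = nat \<lfloor>t\<rfloor>"
  have "0 \<le> t" using t by simp
  then have j: "real j \<le> t" "t < real j + 1" unfolding j_def by linarith+
  moreover have "j < T" using j t by auto
  ultimately show ?thesis using that traj_eq_seg by blast
qed

lemma g_lipschitz:
  assumes "norm a \<le> r" "norm b \<le> r"
  shows "norm (g a y - g b y) \<le> G r (norm y) * norm (a - b)"
proof (rule norm_diff_le_on_cball[OF g_deriv _ assms])
  fix x :: 'x assume "norm x \<le> r"
  then show "onorm (blinfun_apply (Dg x y)) \<le> G r (norm y)"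
    using Dg_bound[of x y] G_mono[of "norm x" r "norm y" "norm y"]
    by (simp add: norm_blinfun.rep_eq[symmetric])
qed

(* Bounds that depend on the observations only through polynomials in their norms,
   which is what gives them finite moments. *)
fun start_bound :: "(nat \<Rightarrow> 'y) \<Rightarrow> nat \<Rightarrow> real" where
  "start_bound ys 0 = norm x0"
| "start_bound ys (Suc j) = G ((start_bound ys j + C0) * exp K1) (norm (ys (Suc j)))"

definition seg_bound :: "(nat \<Rightarrow> 'y) \<Rightarrow> nat \<Rightarrow> real" where
  "seg_bound ys j = (start_bound ys j + C0) * exp K1"

fun variation_bound :: "(nat \<Rightarrow> 'y) \<Rightarrow> nat \<Rightarrow> real" where
  "variation_bound ys 0 = K1 * (2 * \<rho>) * exp K1"
| "variation_bound ys (Suc j) = G (seg_bound ys j) (norm (ys (Suc j))) * variation_bound ys j * exp K1"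

lemma start_bound_nonneg: "0 \<le> start_bound ys j"
  by (induction j) (auto intro!: G_nonneg mult_nonneg_nonneg add_nonneg_nonneg C0_nonneg)

lemma seg_bound_nonneg: "0 \<le> seg_bound ys j"
  unfolding seg_bound_def by (intro mult_nonneg_nonneg add_nonneg_nonneg start_bound_nonneg C0_nonneg) simp

lemma variation_bound_nonneg: "0 \<le> variation_bound ys j"
  by (induction j) (use K1 rho in \<open>auto intro!: mult_nonneg_nonneg G_nonneg seg_bound_nonneg\<close>)

lemma start_bound_Suc: "start_bound ys (Suc j) = G (seg_bound ys j) (norm (ys (Suc j)))"
  by (simp add: seg_bound_def)

lemma norm_seg_le_start:
  assumes j: "j < T" and t: "t \<in> {real j..real j + 1}"
  shows "norm (seg \<epsilon> ys (Suc j) t) \<le> (norm (start \<epsilon> ys (Suc j)) + C0) * exp K1"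
proof -
  have "norm (seg \<epsilon> ys (Suc j) t) \<le> (norm (start \<epsilon> ys (Suc j)) + C0 * (real j + 1 - real j)) * exp (K1 * (t - real j))"
    using integral_solution_norm_le[OF admissible_on_ctl_segment[OF j] seg_integral_solution(1)[OF j] t]
    by (simp add: seg_integral_solution(2)[OF j])
  also have "\<dots> = (norm (start \<epsilon> ys (Suc j)) + C0) * exp (K1 * (t - real j))" by simp
  also have "\<dots> \<le> (norm (start \<epsilon> ys (Suc j)) + C0) * exp K1"
    using t K1 C0_nonneg mult_left_mono[of "t - real j" 1 K1] by (intro mult_left_mono) auto
  finally show ?thesis .
qed

lemma seg_bound_ge: "j < T \<Longrightarrow> norm (start \<epsilon> ys (Suc j)) \<le> start_bound ys j \<Longrightarrow>
    t \<in> {real j..real j + 1} \<Longrightarrow> norm (seg \<epsilon> ys (Suc j) t) \<le> seg_bound ys j"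
  using norm_seg_le_start[of j t \<epsilon> ys] unfolding seg_bound_def
  by (meson add_right_mono exp_ge_zero mult_right_mono order_trans)

lemma norm_start_le: "j \<le> T \<Longrightarrow> norm (start \<epsilon> ys (Suc j)) \<le> start_bound ys j"
proof (induction j)
  case (Suc j)
  have "norm (start \<epsilon> ys (Suc (Suc j))) \<le> G (norm (seg \<epsilon> ys (Suc j) (real j + 1))) (norm (ys (Suc j)))"
    unfolding start_Suc_Suc by (rule g_bound)
  also have "\<dots> \<le> G (seg_bound ys j) (norm (ys (Suc j)))"
    using seg_bound_ge[of j \<epsilon> ys "real j + 1"] Suc by (intro G_mono) auto
  finally show ?case by (simp only: start_bound_Suc)
qed simp

lemma norm_seg_le: "j < T \<Longrightarrow> t \<in> {real j..real j + 1} \<Longrightarrow> norm (seg \<epsilon> ys (Suc j) t) \<le> seg_bound ys j"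
  using seg_bound_ge norm_start_le by simp

lemma norm_start_variation_le:
  assumes "Suc j \<le> T"
  shows "norm (start \<epsilon> ys (Suc (Suc j)) - start 0 ys (Suc (Suc j)))
           \<le> G (seg_bound ys j) (norm (ys (Suc j))) * norm (seg \<epsilon> ys (Suc j) (real j + 1) - seg 0 ys (Suc j) (real j + 1))"
  unfolding start_Suc_Suc using assms by (intro g_lipschitz norm_seg_le) auto

lemma norm_first_seg_variation_le:
  assumes \<epsilon>: "\<epsilon> \<in> {0..\<tau>}" and t: "t \<in> {0..1}"
  shows "norm (seg \<epsilon> ys 1 t - seg 0 ys 1 t) \<le> variation_bound ys 0 * \<epsilon>"
proof -
  have "norm (seg \<epsilon> ys 1 t - seg 0 ys 1 t) \<le> K1 * (2 * \<rho> * \<epsilon>) * exp (K1 * (1 - 0))"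
    using seg_integral_solution[of 0 \<epsilon> ys] seg_integral_solution[of 0 0 ys] T \<epsilon> tau t
    by (intro needle_solution_diff_le[OF admissible_on_subinterval[OF u] v]) (auto simp: needle_zero)
  then show ?thesis by (simp add: mult_ac)
qed

lemma seg_eq_ode_sol_u:
  "0 < j \<Longrightarrow> 0 \<le> \<epsilon> \<Longrightarrow> seg \<epsilon> ys (Suc j) = ode_sol f u (real j) (real j + 1) (start \<epsilon> ys (Suc j))"
  unfolding seg_eq_ode_sol by (rule ode_sol_cong) (auto intro: ctl_eq_after_one)

lemma norm_seg_variation_le:
  assumes \<epsilon>: "\<epsilon> \<in> {0..\<tau>}"
  shows "j < T \<Longrightarrow> t \<in> {real j..real j + 1} \<Longrightarrow> norm (seg \<epsilon> ys (Suc j) t - seg 0 ys (Suc j) t) \<le> variation_bound ys j * \<epsilon>"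
proof (induction j arbitrary: t)
  case 0
  then show ?case using norm_first_seg_variation_le[OF \<epsilon>] by simp
next
  case (Suc j)
  have u_seg: "admissible_on (real (Suc j)) (real (Suc j) + 1) u"
    by (rule admissible_on_subinterval[OF u]) (use Suc.prems in auto)
  have "norm (seg \<epsilon> ys (Suc (Suc j)) t - seg 0 ys (Suc (Suc j)) t)
      \<le> exp K1 * norm (start \<epsilon> ys (Suc (Suc j)) - start 0 ys (Suc (Suc j)))"
    using ode_sol_lipschitz_initial[OF u_seg] \<epsilon> by (simp add: seg_eq_ode_sol_u)
  also have "\<dots> \<le> exp K1 * (G (seg_bound ys j) (norm (ys (Suc j)))
      * norm (seg \<epsilon> ys (Suc j) (real j + 1) - seg 0 ys (Suc j) (real j + 1)))"
    using norm_start_variation_le[of j \<epsilon> ys] Suc.prems by (intro mult_left_mono) auto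
  also have "\<dots> \<le> exp K1 * (G (seg_bound ys j) (norm (ys (Suc j))) * (variation_bound ys j * \<epsilon>))"
    using Suc.prems by (intro mult_left_mono Suc.IH G_nonneg seg_bound_nonneg) auto
  finally show ?case by (simp add: mult_ac)
qed

definition traj_bound :: "(nat \<Rightarrow> 'y) \<Rightarrow> real" where
  "traj_bound ys = (\<Sum>j\<le>T. seg_bound ys j)"

definition traj_variation_bound :: "(nat \<Rightarrow> 'y) \<Rightarrow> real" where
  "traj_variation_bound ys = (\<Sum>j\<le>T. variation_bound ys j)"

lemma seg_bound_le_traj_bound: "j \<le> T \<Longrightarrow> seg_bound ys j \<le> traj_bound ys"
  unfolding traj_bound_def by (rule member_le_sum) (auto intro: seg_bound_nonneg)

lemma variation_bound_le_traj_variation_bound: "j \<le> T \<Longrightarrow> variation_bound ys j \<le> traj_variation_bound ys"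
  unfolding traj_variation_bound_def by (rule member_le_sum) (auto intro: variation_bound_nonneg)

lemma norm_traj_le:
  assumes t: "t \<in> {0..real T}"
  shows "norm (traj \<epsilon> ys t) \<le> traj_bound ys"
proof (cases "t = real T")
  case True
  have "norm (traj \<epsilon> ys t) \<le> start_bound ys T"
    unfolding True traj_final by (rule norm_start_le) simp
  also have "\<dots> \<le> (start_bound ys T + C0) * 1" using C0_nonneg by simp
  also have "\<dots> \<le> seg_bound ys T"
    unfolding seg_bound_def
    by (intro mult_left_mono one_le_exp_K1 add_nonneg_nonneg start_bound_nonneg C0_nonneg)
  finally show ?thesis using seg_bound_le_traj_bound[of T ys] by simp
next
  case False
  then obtain j where "j < T" "real j \<le> t" "t < real j + 1" "traj \<epsilon> ys t = seg \<epsilon> ys (Suc j) t"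
    using traj_cases[OF t] by metis
  then show ?thesis
    using norm_seg_le[of j t \<epsilon> ys] seg_bound_le_traj_bound[of j ys] by simp
qed

lemma norm_traj_variation_le:
  assumes \<epsilon>: "\<epsilon> \<in> {0..\<tau>}" and t: "t \<in> {0..real T}"
  shows "norm (traj \<epsilon> ys t - traj 0 ys t) \<le> traj_variation_bound ys * \<epsilon>"
proof (cases "t = real T")
  case True
  obtain j where T_eq: "T = Suc j" using T by (cases T) auto
  have "norm (traj \<epsilon> ys t - traj 0 ys t) = norm (start \<epsilon> ys (Suc T) - start 0 ys (Suc T))"
    unfolding True traj_final ..
  also have "\<dots> = norm (start \<epsilon> ys (Suc (Suc j)) - start 0 ys (Suc (Suc j)))"
    by (simp only: T_eq)
  also have "\<dots> \<le> G (seg_bound ys j) (norm (ys (Suc j)))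
      * norm (seg \<epsilon> ys (Suc j) (real j + 1) - seg 0 ys (Suc j) (real j + 1))"
    by (rule norm_start_variation_le) (simp add: T_eq)
  also have "\<dots> \<le> G (seg_bound ys j) (norm (ys (Suc j))) * (variation_bound ys j * \<epsilon>)"
    by (intro mult_left_mono norm_seg_variation_le[OF \<epsilon>] G_nonneg seg_bound_nonneg) (auto simp: T_eq)
  also have "\<dots> \<le> variation_bound ys T * \<epsilon>"
  proof -
    have "0 \<le> G (seg_bound ys j) (norm (ys (Suc j))) * variation_bound ys j"
      by (intro mult_nonneg_nonneg G_nonneg seg_bound_nonneg variation_bound_nonneg norm_ge_zero)
    then have "G (seg_bound ys j) (norm (ys (Suc j))) * variation_bound ys j
        \<le> G (seg_bound ys j) (norm (ys (Suc j))) * variation_bound ys j * exp K1"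
      using one_le_exp_K1 by (simp add: mult_le_cancel_left1)
    from mult_right_mono[OF this, of \<epsilon>] \<epsilon> show ?thesis by (simp add: T_eq mult.assoc)
  qed
  also have "\<dots> \<le> traj_variation_bound ys * \<epsilon>"
    using \<epsilon> by (intro mult_right_mono variation_bound_le_traj_variation_bound) auto
  finally show ?thesis .
next
  case False
  then obtain j where j: "j < T" "real j \<le> t" "t < real j + 1"
    and traj_t: "\<And>\<epsilon>. traj \<epsilon> ys t = seg \<epsilon> ys (Suc j) t"
    using traj_cases[OF t] by metis
  have "norm (traj \<epsilon> ys t - traj 0 ys t) \<le> variation_bound ys j * \<epsilon>"
    unfolding traj_t using j by (intro norm_seg_variation_le[OF \<epsilon>]) auto
  also have "\<dots> \<le> traj_variation_bound ys * \<epsilon>"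
    using \<epsilon> j by (intro mult_right_mono variation_bound_le_traj_variation_bound) auto
  finally show ?thesis .
qed

lemma first_seg_has_vector_derivative:
  "\<exists>\<Psi>. \<forall>t\<in>{\<tau>..1}. ((\<lambda>\<epsilon>. seg \<epsilon> ys 1 t) has_vector_derivative \<Psi> t) (at 0 within {0..\<tau>})"
proof -
  have sol: "integral_solution 0 1 (ctl \<epsilon>) (seg \<epsilon> ys 1)" and start: "seg \<epsilon> ys 1 0 = x0" for \<epsilon>
    using seg_integral_solution[of 0 \<epsilon> ys] T by auto
  have u1: "admissible_on 0 1 u" by (rule admissible_on_subinterval[OF u]) (use T in auto)
  have "((\<lambda>\<epsilon>. seg \<epsilon> ys 1 \<tau>) has_vector_derivative f (seg 0 ys 1 \<tau>) v - f (seg 0 ys 1 \<tau>) (u \<tau>))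
      (at 0 within {0..\<tau> - 0})"
    by (rule needle_has_vector_derivative[OF u1 v _ _ u_left sol]) (use tau start in auto)
  then show ?thesis
  proof (intro solution_family_differentiable[where C = "variation_bound ys 0"])
    show "admissible_on \<tau> 1 u" by (rule admissible_on_subinterval[OF u1]) (use tau in auto)
    show "integral_solution \<tau> 1 u (seg \<epsilon> ys 1)" if "\<epsilon> \<in> {0..\<tau>}" for \<epsilon>
    proof -
      have "integral_solution \<tau> 1 (ctl \<epsilon>) (seg \<epsilon> ys 1)"
        by (rule integral_solution_subinterval[OF admissible_on_subinterval[OF admissible_on_ctl] sol])
           (use tau T in auto)
      then show ?thesis
        using integral_solution_cong[of "{\<tau>}" \<tau> 1 "ctl \<epsilon>" u] by (simp add: needle_def)
    qed
    show "norm (seg \<epsilon> ys 1 t - seg 0 ys 1 t) \<le> variation_bound ys 0 * \<epsilon>" if "\<epsilon> \<in> {0..\<tau>}" "t \<in> {\<tau>..1}" for \<epsilon> t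
      using norm_first_seg_variation_le that tau by auto
  qed (use tau in auto)
qed

lemma seg_has_vector_derivative_of_start:
  assumes j: "0 < j" "j < T"
    and start: "((\<lambda>\<epsilon>. start \<epsilon> ys (Suc j)) has_vector_derivative L) (at 0 within {0..\<tau>})"
  shows "\<exists>\<Psi>. \<forall>t\<in>{real j..real j + 1}. ((\<lambda>\<epsilon>. seg \<epsilon> ys (Suc j) t) has_vector_derivative \<Psi> t) (at 0 within {0..\<tau>})"
proof (rule solution_family_differentiable[where C = "variation_bound ys j"])
  show "admissible_on (real j) (real j + 1) u" by (rule admissible_on_subinterval[OF u]) (use j in auto)
  show "integral_solution (real j) (real j + 1) u (seg \<epsilon> ys (Suc j))" if "\<epsilon> \<in> {0..\<tau>}" for \<epsilon>
    using seg_integral_solution(1)[OF j(2), of \<epsilon> ys] integral_solution_cong[of "{}" "real j" "real j + 1" "ctl \<epsilon>" u]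
      ctl_eq_after_one that j by auto
  show "norm (seg \<epsilon> ys (Suc j) t - seg 0 ys (Suc j) t) \<le> variation_bound ys j * \<epsilon>"
    if "\<epsilon> \<in> {0..\<tau>}" "t \<in> {real j..real j + 1}" for \<epsilon> t
    by (rule norm_seg_variation_le[OF that(1) j(2) that(2)])
  show "((\<lambda>\<epsilon>. seg \<epsilon> ys (Suc j) (real j)) has_vector_derivative L) (at 0 within {0..\<tau>})"
    using start by (simp add: seg_integral_solution(2)[OF j(2)])
qed (use tau in auto)

lemma start_has_vector_derivative:
  assumes "((\<lambda>\<epsilon>. seg \<epsilon> ys (Suc j) (real j + 1)) has_vector_derivative L) (at 0 within {0..\<tau>})"
  shows "((\<lambda>\<epsilon>. start \<epsilon> ys (Suc (Suc j))) has_vector_derivative Dg (seg 0 ys (Suc j) (real j + 1)) (ys (Suc j)) L)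
           (at 0 within {0..\<tau>})"
  unfolding start_Suc_Suc
  using vector_derivative_diff_chain_within[OF assms has_derivative_at_withinI[OF g_deriv]] by (simp add: o_def)

lemma seg_has_vector_derivative:
  "j < T \<Longrightarrow> t \<in> {max \<tau> (real j)..real j + 1} \<Longrightarrow>
    \<exists>L. ((\<lambda>\<epsilon>. seg \<epsilon> ys (Suc j) t) has_vector_derivative L) (at 0 within {0..\<tau>})"
proof (induction j arbitrary: t)
  case 0
  then show ?case using first_seg_has_vector_derivative[of ys] tau by auto
next
  case (Suc j)
  obtain L where "((\<lambda>\<epsilon>. seg \<epsilon> ys (Suc j) (real j + 1)) has_vector_derivative L) (at 0 within {0..\<tau>})"
    using Suc.IH[of "real j + 1"] Suc.prems tau by auto
  from seg_has_vector_derivative_of_start[OF _ Suc.prems(1) start_has_vector_derivative[OF this]]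
  show ?case using Suc.prems tau by (auto simp: add.commute)
qed

lemma traj_has_vector_derivative:
  assumes t: "t \<in> {\<tau>..real T}"
  shows "\<exists>L. ((\<lambda>\<epsilon>. traj \<epsilon> ys t) has_vector_derivative L) (at 0 within {0..\<tau>})"
proof (cases "t = real T")
  case True
  obtain j where T_eq: "T = Suc j" using T by (cases T) auto
  obtain L where "((\<lambda>\<epsilon>. seg \<epsilon> ys (Suc j) (real j + 1)) has_vector_derivative L) (at 0 within {0..\<tau>})"
    using seg_has_vector_derivative[of j "real j + 1" ys] T_eq tau by auto
  from start_has_vector_derivative[OF this] show ?thesis
    unfolding True traj_final unfolding T_eq by blast
next
  case False
  then obtain j where "j < T" "real j \<le> t" "t < real j + 1" "\<And>\<epsilon>. traj \<epsilon> ys t = seg \<epsilon> ys (Suc j) t"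
    using traj_cases[of t] t tau by auto
  then show ?thesis using seg_has_vector_derivative[of j t ys] t by auto
qed

end

section \<open>Random variables with finite moments of all orders\<close>

definition has_moments :: "'w measure \<Rightarrow> ('w \<Rightarrow> real) \<Rightarrow> bool" where
  "has_moments M h \<longleftrightarrow> h \<in> borel_measurable M \<and> (\<forall>\<omega>. 0 \<le> h \<omega>) \<and> (\<forall>k. integrable M (\<lambda>\<omega>. h \<omega> ^ k))"

lemma add_power_le:
  fixes a b :: real assumes "0 \<le> a" "0 \<le> b"
  shows "(a + b) ^ k \<le> 2 ^ k * (a ^ k + b ^ k)"
proof -
  have "(a + b) ^ k \<le> (2 * max a b) ^ k" using assms by (intro power_mono) auto
  also have "\<dots> = 2 ^ k * max a b ^ k" by (simp add: power_mult_distrib)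
  also have "max a b ^ k \<le> a ^ k + b ^ k"
  proof (cases "a \<le> b")
    case True then show ?thesis using assms by (simp add: max_def)
  next
    case False then show ?thesis using assms by (simp add: max_def)
  qed
  finally show ?thesis by (simp add: mult_left_mono)
qed

lemma mult_power_le:
  fixes a b :: real assumes "0 \<le> a" "0 \<le> b"
  shows "(a * b) ^ k \<le> a ^ (2 * k) + b ^ (2 * k)"
proof -
  have x: "0 \<le> a ^ k" "0 \<le> b ^ k" using assms by auto
  have "(a * b) ^ k = a ^ k * b ^ k" by (simp add: power_mult_distrib)
  also have "\<dots> \<le> (a ^ k)\<^sup>2 + (b ^ k)\<^sup>2"
  proof -
    have e: "(a ^ k)\<^sup>2 + (b ^ k)\<^sup>2 - a ^ k * b ^ k = (a ^ k - b ^ k)\<^sup>2 + a ^ k * b ^ k"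
      by (simp add: power2_eq_square algebra_simps)
    have "0 \<le> (a ^ k - b ^ k)\<^sup>2" by simp
    moreover have "0 \<le> a ^ k * b ^ k" using x by simp
    ultimately show ?thesis using e by linarith
  qed
  finally show ?thesis by (simp add: power_mult[symmetric] mult.commute)
qed

context
  fixes M :: "'w measure"
  assumes M: "prob_space M"
begin

lemma has_moments_const: "0 \<le> c \<Longrightarrow> has_moments M (\<lambda>_. c)"
  unfolding has_moments_def using M by (simp add: prob_space.finite_measure finite_measure.integrable_const)

lemma has_moments_add:
  assumes a: "has_moments M h1" and b: "has_moments M h2"
  shows "has_moments M (\<lambda>\<omega>. h1 \<omega> + h2 \<omega>)"
  unfolding has_moments_def
proof (intro conjI allI)
  show "(\<lambda>\<omega>. h1 \<omega> + h2 \<omega>) \<in> borel_measurable M" using a b unfolding has_moments_def by auto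
  show "0 \<le> h1 \<omega> + h2 \<omega>" for \<omega> using a b unfolding has_moments_def by (simp add: add_nonneg_nonneg)
  fix k
  have i: "integrable M (\<lambda>\<omega>. 2 ^ k * (h1 \<omega> ^ k + h2 \<omega> ^ k))"
    using a b unfolding has_moments_def by (intro Bochner_Integration.integrable_mult_right Bochner_Integration.integrable_add) auto
  show "integrable M (\<lambda>\<omega>. (h1 \<omega> + h2 \<omega>) ^ k)"
  proof (rule Bochner_Integration.integrable_bound[OF i])
    show "(\<lambda>\<omega>. (h1 \<omega> + h2 \<omega>) ^ k) \<in> borel_measurable M" using a b unfolding has_moments_def by auto
    show "AE \<omega> in M. norm ((h1 \<omega> + h2 \<omega>) ^ k) \<le> norm (2 ^ k * (h1 \<omega> ^ k + h2 \<omega> ^ k))"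
    proof (rule AE_I2)
      fix \<omega>
      have n: "0 \<le> h1 \<omega>" "0 \<le> h2 \<omega>" using a b unfolding has_moments_def by auto
      have "0 \<le> (h1 \<omega> + h2 \<omega>) ^ k" "0 \<le> 2 ^ k * (h1 \<omega> ^ k + h2 \<omega> ^ k)" using n by simp_all
      then show "norm ((h1 \<omega> + h2 \<omega>) ^ k) \<le> norm (2 ^ k * (h1 \<omega> ^ k + h2 \<omega> ^ k))"
        using add_power_le[OF n, of k] by (simp only: real_norm_def abs_of_nonneg)
    qed
  qed
qed

lemma has_moments_mult:
  assumes a: "has_moments M h1" and b: "has_moments M h2"
  shows "has_moments M (\<lambda>\<omega>. h1 \<omega> * h2 \<omega>)"
  unfolding has_moments_def
proof (intro conjI allI)
  show "(\<lambda>\<omega>. h1 \<omega> * h2 \<omega>) \<in> borel_measurable M" using a b unfolding has_moments_def by auto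
  show "0 \<le> h1 \<omega> * h2 \<omega>" for \<omega> using a b unfolding has_moments_def by (simp add: mult_nonneg_nonneg)
  fix k
  have i: "integrable M (\<lambda>\<omega>. h1 \<omega> ^ (2 * k) + h2 \<omega> ^ (2 * k))"
    using a b unfolding has_moments_def by (intro Bochner_Integration.integrable_add) auto
  show "integrable M (\<lambda>\<omega>. (h1 \<omega> * h2 \<omega>) ^ k)"
  proof (rule Bochner_Integration.integrable_bound[OF i])
    show "(\<lambda>\<omega>. (h1 \<omega> * h2 \<omega>) ^ k) \<in> borel_measurable M" using a b unfolding has_moments_def by auto
    show "AE \<omega> in M. norm ((h1 \<omega> * h2 \<omega>) ^ k) \<le> norm (h1 \<omega> ^ (2 * k) + h2 \<omega> ^ (2 * k))"
    proof (rule AE_I2)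
      fix \<omega>
      have n: "0 \<le> h1 \<omega>" "0 \<le> h2 \<omega>" using a b unfolding has_moments_def by auto
      have "0 \<le> (h1 \<omega> * h2 \<omega>) ^ k" "0 \<le> h1 \<omega> ^ (2 * k) + h2 \<omega> ^ (2 * k)" using n by simp_all
      then show "norm ((h1 \<omega> * h2 \<omega>) ^ k) \<le> norm (h1 \<omega> ^ (2 * k) + h2 \<omega> ^ (2 * k))"
        using mult_power_le[OF n, of k] by (simp only: real_norm_def abs_of_nonneg)
    qed
  qed
qed

lemma has_moments_power:
  assumes a: "has_moments M h" shows "has_moments M (\<lambda>\<omega>. h \<omega> ^ L)"
  using a unfolding has_moments_def by (auto simp: power_mult[symmetric])

lemma has_moments_cmult: "0 \<le> c \<Longrightarrow> has_moments M h \<Longrightarrow> has_moments M (\<lambda>\<omega>. c * h \<omega>)"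
  using has_moments_mult[OF has_moments_const] by blast

lemma has_moments_sum: "finite I \<Longrightarrow> (\<And>i. i \<in> I \<Longrightarrow> has_moments M (h i)) \<Longrightarrow> has_moments M (\<lambda>\<omega>. \<Sum>i\<in>I. h i \<omega>)"
proof (induction I rule: finite_induct)
  case empty then show ?case using has_moments_const[of 0] by simp
next
  case (insert x F) then show ?case by (simp add: has_moments_add)
qed

lemma has_moments_norm:
  assumes "Z \<in> borel_measurable M" "\<And>k. integrable M (\<lambda>\<omega>. norm (Z \<omega>) ^ k)"
  shows "has_moments M (\<lambda>\<omega>. norm (Z \<omega>))"
  using assms unfolding has_moments_def by auto

lemma has_moments_integrable: "has_moments M h \<Longrightarrow> integrable M h"
proof -
  assume "has_moments M h"
  then have "integrable M (\<lambda>\<omega>. h \<omega> ^ 1)" unfolding has_moments_def by blast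
  then show ?thesis by simp
qed

lemma integrable_bounded_by_has_moments:
  assumes "has_moments M h" "q \<in> borel_measurable M" "\<And>\<omega>. \<bar>q \<omega>\<bar> \<le> h \<omega>"
  shows "integrable M q"
proof (rule Bochner_Integration.integrable_bound[OF has_moments_integrable[OF assms(1)] assms(2)], rule AE_I2)
  fix \<omega>
  have "0 \<le> h \<omega>" using assms(1) unfolding has_moments_def by blast
  then show "norm (q \<omega>) \<le> norm (h \<omega>)" using assms(3)[of \<omega>] by simp
qed

end

section \<open>The expected cost\<close>

locale hybrid_cost_system = hybrid_system f \<rho> K1 f' g Dg T \<tau> v u x0 K2 K3 K4 K5 L1 L2
  for f :: "'x::euclidean_space \<Rightarrow> 'm::euclidean_space \<Rightarrow> 'x" and \<rho> K1 f'
    and g :: "'x \<Rightarrow> 'y::euclidean_space \<Rightarrow> 'x" and Dg T \<tau> v u x0 K2 K3 K4 K5 L1 L2 +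
  fixes c :: "'x \<Rightarrow> 'm \<Rightarrow> real" and cx :: "'x \<Rightarrow> 'm \<Rightarrow> 'x" and K6 K7 :: real and L3 :: nat
  assumes c_cont: "continuous_on UNIV (\<lambda>(x, w). c x w)"
    and c_deriv: "\<And>x w. ((\<lambda>x. c x w) has_derivative (\<lambda>h. cx x w \<bullet> h)) (at x)"
    and K67: "K6 \<ge> 0" "K7 \<ge> 0"
    and c_bound: "\<And>x w. norm w \<le> \<rho> \<Longrightarrow> \<bar>c x w\<bar> \<le> K6 + K7 * norm x ^ L3"
    and cx_bound: "\<And>x w. norm w \<le> \<rho> \<Longrightarrow> norm (cx x w) \<le> K6 + K7 * norm x ^ L3"
begin

definition cost :: "real \<Rightarrow> (nat \<Rightarrow> 'y) \<Rightarrow> real" where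
  "cost \<epsilon> ys = integral {\<tau>..real T} (\<lambda>t. c (traj \<epsilon> ys t) (ctl \<epsilon> t))"

(* For t \<ge> \<tau> the limit exists by traj_has_vector_derivative; it is the state variation \<Psi> t. *)
definition cost_variation :: "(nat \<Rightarrow> 'y) \<Rightarrow> real" where
  "cost_variation ys = integral {\<tau>..real T}
     (\<lambda>t. cx (traj 0 ys t) (ctl 0 t) \<bullet> Lim (at_right 0) (\<lambda>\<epsilon>. (traj \<epsilon> ys t - traj 0 ys t) /\<^sub>R \<epsilon>))"

definition cost_bound :: "(nat \<Rightarrow> 'y) \<Rightarrow> real" where
  "cost_bound ys = K6 + K7 * traj_bound ys ^ L3"

lemma c_bound_mono: "norm w \<le> \<rho> \<Longrightarrow> norm x \<le> r \<Longrightarrow> \<bar>c x w\<bar> \<le> K6 + K7 * r ^ L3"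
  using c_bound[of w x] K67 by (smt (verit) mult_left_mono norm_ge_zero power_mono)

lemma c_lipschitz:
  assumes "norm a \<le> r" "norm b \<le> r" "norm w \<le> \<rho>"
  shows "\<bar>c a w - c b w\<bar> \<le> (K6 + K7 * r ^ L3) * norm (a - b)"
proof -
  have "norm (c a w - c b w) \<le> (K6 + K7 * r ^ L3) * norm (a - b)"
  proof (rule norm_diff_le_on_cball[OF c_deriv _ assms(1,2)])
    fix x :: 'x assume x: "norm x \<le> r"
    show "onorm (\<lambda>h. cx x w \<bullet> h) \<le> K6 + K7 * r ^ L3"
    proof (rule onorm_le)
      fix h
      have "norm (cx x w \<bullet> h) \<le> norm (cx x w) * norm h" by (simp add: Cauchy_Schwarz_ineq2)
      also have "\<dots> \<le> (K6 + K7 * r ^ L3) * norm h"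
        using cx_bound[OF assms(3), of x] x K67
        by (intro mult_right_mono) (smt (verit) mult_left_mono norm_ge_zero power_mono, simp)
      finally show "norm (cx x w \<bullet> h) \<le> (K6 + K7 * r ^ L3) * norm h" .
    qed
  qed
  then show ?thesis by simp
qed

lemma cost_bound_nonneg: "0 \<le> cost_bound ys"
  unfolding cost_bound_def traj_bound_def using K67
  by (intro add_nonneg_nonneg mult_nonneg_nonneg zero_le_power sum_nonneg seg_bound_nonneg) auto

lemma continuous_on_traj: "continuous_on ({0..real T} - real ` {0..T}) (traj \<epsilon> ys)"
  unfolding continuous_on_eq_continuous_within
proof
  fix t assume t: "t \<in> {0..real T} - real ` {0..T}"
  then have "t \<in> {0..real T}" "t \<noteq> real T" by auto
  then obtain j where j: "j < T" "real j \<le> t" "t < real j + 1"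
    using traj_cases by metis
  have "t \<noteq> real j" using t j(1) by force
  then have tj: "real j < t" using j(2) by simp
  have "continuous (at t) (seg \<epsilon> ys (Suc j))"
    using integral_solution_continuous[OF seg_integral_solution(1)[OF j(1)]] tj j(3)
    by (intro continuous_on_interior[of "{real j..real j + 1}"]) auto
  then have seg_cont: "continuous (at t within {0..real T} - real ` {0..T}) (seg \<epsilon> ys (Suc j))"
    by (rule continuous_at_imp_continuous_at_within)
  show "continuous (at t within {0..real T} - real ` {0..T}) (traj \<epsilon> ys)"
  proof (rule continuous_transform_within[OF seg_cont, of "min (t - real j) (real j + 1 - t)"])
    show "0 < min (t - real j) (real j + 1 - t)" using tj j by simp
    fix t' assume "t' \<in> {0..real T} - real ` {0..T}" "dist t' t < min (t - real j) (real j + 1 - t)"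
    then show "seg \<epsilon> ys (Suc j) t' = traj \<epsilon> ys t'"
      using j by (intro traj_eq_seg[symmetric]) (auto simp: dist_real_def)
  qed (use t in auto)
qed

lemma integrable_cost_traj:
  assumes w: "admissible_on 0 T w" and sub: "{a..b} \<subseteq> {0..real T}"
  shows "(\<lambda>t. c (traj \<epsilon> ys t) (w t)) integrable_on {a..b}"
proof -
  obtain S where S: "finite S" "continuous_on ({0..real T} - S) w"
    using w unfolding admissible_on_def by auto
  have "(\<lambda>t. c (traj \<epsilon> ys t) (w t)) integrable_on {0..real T}"
  proof (rule integrable_on_bounded_continuous_off_finite[of "S \<union> real ` {0..T}"])
    show "finite (S \<union> real ` {0..T})" using S by simp
    have "continuous_on ({0..real T} - (S \<union> real ` {0..T})) (\<lambda>t. (traj \<epsilon> ys t, w t))"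
      by (intro continuous_on_Pair continuous_on_subset[OF continuous_on_traj] continuous_on_subset[OF S(2)])
         auto
    from continuous_on_compose2[OF c_cont this]
    show "continuous_on ({0..real T} - (S \<union> real ` {0..T})) (\<lambda>t. c (traj \<epsilon> ys t) (w t))" by auto
    fix s assume s: "s \<in> {0..real T}"
    show "norm (c (traj \<epsilon> ys s) (w s)) \<le> cost_bound ys"
      unfolding cost_bound_def using c_bound_mono[OF admissible_on_bound[OF w s] norm_traj_le[OF s]] by simp
  qed
  then show ?thesis using sub by (rule integrable_on_subinterval)
qed

lemma cost_eq_integral_u: "cost \<epsilon> ys = integral {\<tau>..real T} (\<lambda>t. c (traj \<epsilon> ys t) (u t))"
  unfolding cost_def by (rule integral_spike[of "{\<tau>}"]) (auto simp: needle_def)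

lemma cost_integrand_variation_le:
  assumes \<epsilon>: "\<epsilon> \<in> {0..\<tau>}" and t: "t \<in> {0..real T}"
  shows "\<bar>c (traj \<epsilon> ys t) (u t) - c (traj 0 ys t) (u t)\<bar> \<le> cost_bound ys * (traj_variation_bound ys * \<epsilon>)"
proof -
  have "\<bar>c (traj \<epsilon> ys t) (u t) - c (traj 0 ys t) (u t)\<bar> \<le> cost_bound ys * norm (traj \<epsilon> ys t - traj 0 ys t)"
    unfolding cost_bound_def by (rule c_lipschitz[OF norm_traj_le[OF t] norm_traj_le[OF t] admissible_on_bound[OF u t]])
  also have "\<dots> \<le> cost_bound ys * (traj_variation_bound ys * \<epsilon>)"
    by (intro mult_left_mono norm_traj_variation_le[OF \<epsilon> t] cost_bound_nonneg)
  finally show ?thesis .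
qed

lemma cost_difference_quotient_tendsto:
  assumes e: "\<And>n. e n \<in> {0<..\<tau>}" "e \<longlonglongrightarrow> 0"
  shows "(\<lambda>n. (cost (e n) ys - cost 0 ys) / e n) \<longlonglongrightarrow> cost_variation ys"
proof -
  have e_pos: "0 < e n" and e_range: "e n \<in> {0..\<tau>}" for n using e(1)[of n] by auto
  have sub: "{\<tau>..real T} \<subseteq> {0..real T}" using tau by auto
  define F where "F n t = (c (traj (e n) ys t) (u t) - c (traj 0 ys t) (u t)) / e n" for n t
  define V where "V t = cx (traj 0 ys t) (ctl 0 t) \<bullet> Lim (at_right 0) (\<lambda>\<epsilon>. (traj \<epsilon> ys t - traj 0 ys t) /\<^sub>R \<epsilon>)" for t
  have int: "(\<lambda>t. c (traj \<epsilon> ys t) (u t)) integrable_on {\<tau>..real T}" for \<epsilon>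
    by (rule integrable_cost_traj[OF u sub])
  have F_int: "F n integrable_on {\<tau>..real T}" for n
    unfolding F_def by (intro integrable_on_divide integrable_diff int)
  have F_integral: "(cost (e n) ys - cost 0 ys) / e n = integral {\<tau>..real T} (F n)" for n
    unfolding cost_eq_integral_u F_def by (simp add: integral_diff[OF int int])
  have F_bound: "norm (F n t) \<le> cost_bound ys * traj_variation_bound ys" if t: "t \<in> {\<tau>..real T}" for n t
    using cost_integrand_variation_le[OF e_range, of t] t sub e_pos[of n]
    by (auto simp: F_def abs_divide pos_divide_le_eq mult.assoc)
  have F_lim: "(\<lambda>n. F n t) \<longlonglongrightarrow> V t" if t: "t \<in> {\<tau>..real T}" for t
  proof -
    obtain L where L: "((\<lambda>\<epsilon>. traj \<epsilon> ys t) has_vector_derivative L) (at 0 within {0..\<tau>})"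
      using traj_has_vector_derivative[OF t] by blast
    have "Lim (at_right 0) (\<lambda>\<epsilon>. (traj \<epsilon> ys t - traj 0 ys t) /\<^sub>R \<epsilon>) = L"
      by (rule tendsto_Lim[OF _ difference_quotient_tendsto_at_right[OF L tau(1)]]) simp
    moreover have "ctl 0 t = u t" by (simp add: needle_def)
    ultimately have V: "V t = cx (traj 0 ys t) (u t) \<bullet> L" unfolding V_def by simp
    have "((\<lambda>\<epsilon>. c (traj \<epsilon> ys t) (u t)) has_vector_derivative cx (traj 0 ys t) (u t) \<bullet> L) (at 0 within {0..\<tau>})"
      using vector_derivative_diff_chain_within[OF L has_derivative_at_withinI[OF c_deriv]] by (simp add: o_def)
    from difference_quotient_tendsto_at_right[OF this tau(1)]
    have "((\<lambda>\<epsilon>. (c (traj \<epsilon> ys t) (u t) - c (traj 0 ys t) (u t)) /\<^sub>R \<epsilon>) \<longlongrightarrow> V t) (at_right 0)"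
      by (simp add: V)
    from filterlim_compose[OF this filterlim_at_right_0_sequentially[OF e_pos e(2)]]
    show ?thesis by (simp add: F_def divide_inverse mult.commute)
  qed
  have "(\<lambda>n. integral {\<tau>..real T} (F n)) \<longlonglongrightarrow> integral {\<tau>..real T} V"
    using dominated_convergence[OF F_int integrable_const_ivl F_bound F_lim] by blast
  then show ?thesis unfolding F_integral cost_variation_def V_def .
qed

lemma integrable_cost_continuous:
  assumes w: "admissible_on a b w" and \<phi>: "continuous_on {a..b} \<phi>" and sub: "{a'..b'} \<subseteq> {a..b}"
  shows "(\<lambda>t. c (\<phi> t) (w t)) integrable_on {a'..b'}"
proof -
  obtain S where S: "finite S" "continuous_on ({a..b} - S) w"
    using w unfolding admissible_on_def by auto
  obtain R where R: "\<And>s. s \<in> {a..b} \<Longrightarrow> norm (\<phi> s) \<le> R"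
    using compact_imp_bounded[OF compact_continuous_image[OF \<phi> compact_Icc]] unfolding bounded_iff by blast
  have "(\<lambda>t. c (\<phi> t) (w t)) integrable_on {a..b}"
  proof (rule integrable_on_bounded_continuous_off_finite[OF S(1)])
    have "continuous_on ({a..b} - S) (\<lambda>t. (\<phi> t, w t))"
      by (intro continuous_on_Pair continuous_on_subset[OF \<phi>] S(2)) auto
    from continuous_on_compose2[OF c_cont this]
    show "continuous_on ({a..b} - S) (\<lambda>t. c (\<phi> t) (w t))" by auto
    fix s assume s: "s \<in> {a..b}"
    show "norm (c (\<phi> s) (w s)) \<le> K6 + K7 * R ^ L3"
      using c_bound_mono[OF admissible_on_bound[OF w s] R[OF s]] by simp
  qed
  then show ?thesis using sub by (rule integrable_on_subinterval)
qed

definition segment_cost :: "real \<Rightarrow> nat \<Rightarrow> 'x \<Rightarrow> real" where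
  "segment_cost \<epsilon> j z =
     integral {max \<tau> (real j)..real j + 1} (\<lambda>t. c (ode_sol f (ctl \<epsilon>) (real j) (real j + 1) z t) (u t))"

lemma segment_cost_lipschitz:
  assumes j: "j < T" and z: "norm z \<le> R" "norm z' \<le> R"
  shows "\<bar>segment_cost \<epsilon> j z' - segment_cost \<epsilon> j z\<bar>
           \<le> (K6 + K7 * ((R + C0) * exp K1) ^ L3) * exp K1 * norm (z' - z)"
proof -
  define \<Phi> where "\<Phi> z = ode_sol f (ctl \<epsilon>) (real j) (real j + 1) z" for z
  define I where "I = {max \<tau> (real j)..real j + 1}"
  define Lc where "Lc = (K6 + K7 * ((R + C0) * exp K1) ^ L3) * exp K1"
  have w: "admissible_on (real j) (real j + 1) (ctl \<epsilon>)" by (rule admissible_on_ctl_segment[OF j])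
  have u_j: "admissible_on (real j) (real j + 1) u" by (rule admissible_on_subinterval[OF u]) (use j in auto)
  have sol: "integral_solution (real j) (real j + 1) (ctl \<epsilon>) (\<Phi> z)" "\<Phi> z (real j) = z" for z
    using ode_sol_integral_solution[OF w] unfolding \<Phi>_def by auto
  have \<Phi>_bound: "norm (\<Phi> z t) \<le> (R + C0) * exp K1" if "norm z \<le> R" "t \<in> {real j..real j + 1}" for z t
  proof -
    have "norm (\<Phi> z t) \<le> (norm z + C0 * (real j + 1 - real j)) * exp (K1 * (t - real j))"
      using integral_solution_norm_le[OF w sol(1) that(2)] by (simp add: sol(2))
    also have "\<dots> \<le> (R + C0) * exp K1"
      using that K1 C0_nonneg mult_left_mono[of "t - real j" 1 K1]
      by (intro mult_mono) (auto intro: add_nonneg_nonneg order_trans[OF norm_ge_zero])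
    finally show ?thesis .
  qed
  have sub: "I \<subseteq> {real j..real j + 1}" unfolding I_def by auto
  have int: "(\<lambda>t. c (\<Phi> z t) (u t)) integrable_on I" for z
    unfolding I_def
    by (rule integrable_cost_continuous[OF u_j integral_solution_continuous[OF sol(1)]]) auto
  have "\<bar>segment_cost \<epsilon> j z' - segment_cost \<epsilon> j z\<bar> = norm (integral I (\<lambda>t. c (\<Phi> z' t) (u t) - c (\<Phi> z t) (u t)))"
    by (simp add: segment_cost_def I_def \<Phi>_def integral_diff[OF int int, unfolded I_def \<Phi>_def])
  also have "\<dots> \<le> integral I (\<lambda>t. Lc * norm (z' - z))"
  proof (rule integral_norm_bound_integral[OF integrable_diff[OF int int]])
    show "(\<lambda>t. Lc * norm (z' - z)) integrable_on I" unfolding I_def by (rule integrable_const_ivl)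
    fix t assume "t \<in> I"
    then have t: "t \<in> {real j..real j + 1}" using sub by auto
    have "\<bar>c (\<Phi> z' t) (u t) - c (\<Phi> z t) (u t)\<bar> \<le> (K6 + K7 * ((R + C0) * exp K1) ^ L3) * norm (\<Phi> z' t - \<Phi> z t)"
      by (rule c_lipschitz[OF \<Phi>_bound[OF z(2) t] \<Phi>_bound[OF z(1) t] admissible_on_bound[OF u_j t]])
    also have "\<dots> \<le> (K6 + K7 * ((R + C0) * exp K1) ^ L3) * (exp (K1 * (real j + 1 - real j)) * norm (z' - z))"
      unfolding \<Phi>_def using K67 C0_nonneg order_trans[OF norm_ge_zero z(1)]
      by (intro mult_left_mono ode_sol_lipschitz_initial[OF w]) auto
    finally show "norm (c (\<Phi> z' t) (u t) - c (\<Phi> z t) (u t)) \<le> Lc * norm (z' - z)"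
      by (simp add: Lc_def mult.assoc)
  qed
  also have "\<dots> = (real j + 1 - max \<tau> (real j)) * (Lc * norm (z' - z))"
    using tau unfolding I_def by simp
  also have "\<dots> \<le> Lc * norm (z' - z)"
    using tau K67 C0_nonneg order_trans[OF norm_ge_zero z(1)] unfolding Lc_def
    by (intro mult_left_le_one_le mult_nonneg_nonneg add_nonneg_nonneg) auto
  finally show ?thesis unfolding Lc_def .
qed

lemma continuous_on_segment_cost:
  assumes j: "j < T"
  shows "continuous_on UNIV (segment_cost \<epsilon> j)"
proof (rule continuous_at_imp_continuous_on, intro ballI)
  fix z :: 'x
  have "norm z' \<le> norm z + 1" if "z' \<in> ball z 1" for z'
    using that norm_triangle_ineq2[of z' z] by (auto simp: dist_norm norm_minus_commute)
  then have "lipschitz_on ((K6 + K7 * ((norm z + 1 + C0) * exp K1) ^ L3) * exp K1) (ball z 1) (segment_cost \<epsilon> j)"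
    using K67 C0_nonneg
    by (intro lipschitz_onI) (auto simp: dist_norm intro!: segment_cost_lipschitz[OF j] mult_nonneg_nonneg add_nonneg_nonneg)
  then have "continuous_on (ball z 1) (segment_cost \<epsilon> j)"
    by (rule lipschitz_on_continuous_on)
  then show "isCont (segment_cost \<epsilon> j) z"
    by (rule continuous_on_interior) simp
qed

lemma cost_eq_sum_segment_cost: "cost \<epsilon> ys = (\<Sum>j<T. segment_cost \<epsilon> j (start \<epsilon> ys (Suc j)))"
proof -
  have seg_cost: "integral {max \<tau> (real k)..real k + 1} (\<lambda>t. c (traj \<epsilon> ys t) (u t))
      = segment_cost \<epsilon> k (start \<epsilon> ys (Suc k))" if "k < T" for k
    unfolding segment_cost_def seg_eq_ode_sol[symmetric]
    by (rule integral_spike[of "{real k + 1}"]) (use that tau in \<open>auto intro!: arg_cong2[where f = c] traj_eq_seg[symmetric]\<close>)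
  have "integral {\<tau>..real k} (\<lambda>t. c (traj \<epsilon> ys t) (u t)) = (\<Sum>j<k. segment_cost \<epsilon> j (start \<epsilon> ys (Suc j)))"
    if "1 \<le> k" "k \<le> T" for k
    using that
  proof (induction k rule: dec_induct)
    case base
    then show ?case using seg_cost[of 0] T tau by simp
  next
    case (step k)
    have "integral {\<tau>..real (Suc k)} (\<lambda>t. c (traj \<epsilon> ys t) (u t))
        = integral {\<tau>..real k} (\<lambda>t. c (traj \<epsilon> ys t) (u t)) + integral {real k..real (Suc k)} (\<lambda>t. c (traj \<epsilon> ys t) (u t))"
      using step tau
      by (intro Henstock_Kurzweil_Integration.integral_combine[symmetric] integrable_cost_traj[OF u]) auto
    then show ?case using step seg_cost[of k] tau by (simp add: max_def add.commute)
  qed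
  then show ?thesis unfolding cost_eq_integral_u using T by simp
qed

lemma measurable_start:
  assumes Y: "\<And>i. i \<in> {1..T} \<Longrightarrow> Y i \<in> borel_measurable M"
  shows "j \<le> T \<Longrightarrow> (\<lambda>\<omega>. start \<epsilon> (\<lambda>i. Y i \<omega>) (Suc j)) \<in> borel_measurable M"
proof (induction j)
  case (Suc j)
  have ode_cont: "continuous_on UNIV (\<lambda>z. ode_sol f (ctl \<epsilon>) (real j) (real j + 1) z (real j + 1))"
    using Suc.prems by (intro continuous_on_ode_sol_initial admissible_on_ctl_segment) auto
  have "continuous_on UNIV (\<lambda>p::'x \<times> 'y. (ode_sol f (ctl \<epsilon>) (real j) (real j + 1) (fst p) (real j + 1), snd p))"
    by (intro continuous_on_Pair continuous_on_compose2[OF ode_cont] continuous_intros) auto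
  from continuous_on_compose2[OF g_cont this]
  have "continuous_on UNIV (\<lambda>p. g (ode_sol f (ctl \<epsilon>) (real j) (real j + 1) (fst p) (real j + 1)) (snd p))"
    by auto
  then have "(\<lambda>\<omega>. g (ode_sol f (ctl \<epsilon>) (real j) (real j + 1) (start \<epsilon> (\<lambda>i. Y i \<omega>) (Suc j)) (real j + 1))
      (Y (Suc j) \<omega>)) \<in> borel_measurable M"
    using Suc by (intro borel_measurable_continuous_Pair[where H = "\<lambda>x y. g (ode_sol f (ctl \<epsilon>) (real j) (real j + 1) x (real j + 1)) y"] Y) auto
  then show ?case unfolding start_Suc_Suc seg_eq_ode_sol .
qed simp

lemma measurable_cost:
  assumes "\<And>i. i \<in> {1..T} \<Longrightarrow> Y i \<in> borel_measurable M"
  shows "(\<lambda>\<omega>. cost \<epsilon> (\<lambda>i. Y i \<omega>)) \<in> borel_measurable M"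
  unfolding cost_eq_sum_segment_cost
  by (intro borel_measurable_sum borel_measurable_continuous_on[OF continuous_on_segment_cost] measurable_start[OF assms]) auto

lemma abs_cost_le: "\<bar>cost \<epsilon> ys\<bar> \<le> (real T - \<tau>) * cost_bound ys"
proof -
  have sub: "{\<tau>..real T} \<subseteq> {0..real T}" using tau by auto
  have "norm (cost \<epsilon> ys) \<le> integral {\<tau>..real T} (\<lambda>t. cost_bound ys)"
    unfolding cost_def
  proof (rule integral_norm_bound_integral[OF integrable_cost_traj[OF admissible_on_ctl sub] integrable_const_ivl])
    fix t assume "t \<in> {\<tau>..real T}"
    then have t: "t \<in> {0..real T}" using sub by auto
    show "norm (c (traj \<epsilon> ys t) (ctl \<epsilon> t)) \<le> cost_bound ys"
      unfolding cost_bound_def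
      using c_bound_mono[OF admissible_on_bound[OF admissible_on_ctl t] norm_traj_le[OF t]] by simp
  qed
  then show ?thesis using tau T by simp
qed

lemma abs_cost_difference_quotient_le:
  assumes \<epsilon>: "\<epsilon> \<in> {0<..\<tau>}"
  shows "\<bar>(cost \<epsilon> ys - cost 0 ys) / \<epsilon>\<bar> \<le> (real T - \<tau>) * (cost_bound ys * traj_variation_bound ys)"
proof -
  have \<epsilon>': "\<epsilon> \<in> {0..\<tau>}" using \<epsilon> by auto
  have sub: "{\<tau>..real T} \<subseteq> {0..real T}" using tau by auto
  have int: "(\<lambda>t. c (traj \<epsilon> ys t) (u t)) integrable_on {\<tau>..real T}" for \<epsilon>
    by (rule integrable_cost_traj[OF u sub])
  have "norm (cost \<epsilon> ys - cost 0 ys) \<le> integral {\<tau>..real T} (\<lambda>t. cost_bound ys * (traj_variation_bound ys * \<epsilon>))"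
    unfolding cost_eq_integral_u integral_diff[OF int int, symmetric]
    using cost_integrand_variation_le[OF \<epsilon>'] sub
    by (intro integral_norm_bound_integral integrable_diff int integrable_const_ivl) auto
  also have "\<dots> = (real T - \<tau>) * (cost_bound ys * traj_variation_bound ys) * \<epsilon>" using tau T by simp
  finally show ?thesis using \<epsilon> by (simp add: abs_divide pos_divide_le_eq)
qed

context
  fixes M :: "'w measure" and Y :: "nat \<Rightarrow> 'w \<Rightarrow> 'y"
  assumes M: "prob_space M"
    and Y_meas: "\<And>i. i \<in> {1..T} \<Longrightarrow> Y i \<in> borel_measurable M"
    and Y_moments: "\<And>i k. i \<in> {1..T} \<Longrightarrow> integrable M (\<lambda>\<omega>. norm (Y i \<omega>) ^ k)"
begin

lemma has_moments_G: "has_moments M r \<Longrightarrow> has_moments M q \<Longrightarrow> has_moments M (\<lambda>\<omega>. G (r \<omega>) (q \<omega>))"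
  unfolding poly_growth_def using K25
  by (intro has_moments_add[OF M] has_moments_cmult[OF M] has_moments_power[OF M] has_moments_mult[OF M]
        has_moments_const[OF M]) auto

lemma has_moments_seg_bound: "j \<le> T \<Longrightarrow> has_moments M (\<lambda>\<omega>. seg_bound (\<lambda>i. Y i \<omega>) j)"
proof (induction j)
  case 0
  then show ?case
    unfolding seg_bound_def start_bound.simps using C0_nonneg
    by (intro has_moments_const[OF M] mult_nonneg_nonneg add_nonneg_nonneg) auto
next
  case (Suc j)
  have "has_moments M (\<lambda>\<omega>. start_bound (\<lambda>i. Y i \<omega>) (Suc j))"
    unfolding start_bound_Suc
    using Suc Y_meas Y_moments by (intro has_moments_G Suc.IH has_moments_norm[OF M]) auto
  then show ?case
    unfolding seg_bound_def using C0_nonneg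
    by (intro has_moments_mult[OF M] has_moments_add[OF M] has_moments_const[OF M]) auto
qed

lemma has_moments_variation_bound: "j \<le> T \<Longrightarrow> has_moments M (\<lambda>\<omega>. variation_bound (\<lambda>i. Y i \<omega>) j)"
proof (induction j)
  case 0
  then show ?case using K1 rho by (simp add: has_moments_const[OF M])
next
  case (Suc j)
  then show ?case
    using Y_meas Y_moments
    by (auto intro!: has_moments_mult[OF M] has_moments_G has_moments_seg_bound has_moments_norm[OF M]
          has_moments_const[OF M])
qed

lemma has_moments_cost_bound: "has_moments M (\<lambda>\<omega>. cost_bound (\<lambda>i. Y i \<omega>))"
  unfolding cost_bound_def traj_bound_def using K67
  by (intro has_moments_add[OF M] has_moments_cmult[OF M] has_moments_power[OF M] has_moments_sum[OF M]
        has_moments_seg_bound has_moments_const[OF M]) auto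

lemma has_moments_cost_quotient_bound:
  "has_moments M (\<lambda>\<omega>. (real T - \<tau>) * (cost_bound (\<lambda>i. Y i \<omega>) * traj_variation_bound (\<lambda>i. Y i \<omega>)))"
proof -
  have "has_moments M (\<lambda>\<omega>. traj_variation_bound (\<lambda>i. Y i \<omega>))"
    unfolding traj_variation_bound_def by (intro has_moments_sum[OF M] has_moments_variation_bound) auto
  then show ?thesis
    using tau T by (intro has_moments_cmult[OF M] has_moments_mult[OF M has_moments_cost_bound]) auto
qed

lemma expected_cost_has_derivative:
  "((\<lambda>\<epsilon>. integral\<^sup>L M (\<lambda>\<omega>. cost \<epsilon> (\<lambda>i. Y i \<omega>))) has_real_derivative
     integral\<^sup>L M (\<lambda>\<omega>. cost_variation (\<lambda>i. Y i \<omega>))) (at 0 within {0..\<tau>})"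
  unfolding has_field_derivative_iff
proof (rule Lim_within_LIMSEQ, intro allI impI)
  fix e :: "nat \<Rightarrow> real" assume e: "(\<forall>n. e n \<noteq> 0 \<and> e n \<in> {0..\<tau>}) \<and> e \<longlonglongrightarrow> 0"
  then have e_range: "e n \<in> {0<..\<tau>}" for n by (metis atLeastAtMost_iff greaterThanAtMost_iff less_eq_real_def)
  define q where "q n \<omega> = (cost (e n) (\<lambda>i. Y i \<omega>) - cost 0 (\<lambda>i. Y i \<omega>)) / e n" for n \<omega>
  have cost_int: "integrable M (\<lambda>\<omega>. cost \<epsilon> (\<lambda>i. Y i \<omega>))" for \<epsilon>
    using tau T abs_cost_le
    by (intro integrable_bounded_by_has_moments[OF M has_moments_cmult[OF M _ has_moments_cost_bound,
          of "real T - \<tau>"] measurable_cost[OF Y_meas]]) auto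
  have q_meas: "q n \<in> borel_measurable M" for n
    unfolding q_def by (intro borel_measurable_divide borel_measurable_diff measurable_cost[OF Y_meas]
        borel_measurable_const)
  have q_lim: "(\<lambda>n. q n \<omega>) \<longlonglongrightarrow> cost_variation (\<lambda>i. Y i \<omega>)" for \<omega>
    unfolding q_def using e by (intro cost_difference_quotient_tendsto e_range) auto
  have "(\<lambda>n. integral\<^sup>L M (q n)) \<longlonglongrightarrow> integral\<^sup>L M (\<lambda>\<omega>. cost_variation (\<lambda>i. Y i \<omega>))"
  proof (rule integral_dominated_convergence[OF borel_measurable_LIMSEQ_real[OF q_lim q_meas] q_meas
        has_moments_integrable[OF M has_moments_cost_quotient_bound]])
    show "AE \<omega> in M. (\<lambda>n. q n \<omega>) \<longlonglongrightarrow> cost_variation (\<lambda>i. Y i \<omega>)" using q_lim by simp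
    show "AE \<omega> in M. norm (q n \<omega>) \<le> (real T - \<tau>) * (cost_bound (\<lambda>i. Y i \<omega>) * traj_variation_bound (\<lambda>i. Y i \<omega>))" for n
      unfolding q_def using abs_cost_difference_quotient_le[OF e_range] by simp
  qed
  moreover have "(integral\<^sup>L M (\<lambda>\<omega>. cost (e n) (\<lambda>i. Y i \<omega>)) - integral\<^sup>L M (\<lambda>\<omega>. cost 0 (\<lambda>i. Y i \<omega>))) / (e n - 0)
      = integral\<^sup>L M (q n)" for n
    unfolding q_def using cost_int by (simp add: Bochner_Integration.integral_diff)
  ultimately show "(\<lambda>n. (integral\<^sup>L M (\<lambda>\<omega>. cost (e n) (\<lambda>i. Y i \<omega>)) - integral\<^sup>L M (\<lambda>\<omega>. cost 0 (\<lambda>i. Y i \<omega>)))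
      / (e n - 0)) \<longlonglongrightarrow> integral\<^sup>L M (\<lambda>\<omega>. cost_variation (\<lambda>i. Y i \<omega>))"
    by simp
qed

end

end

theorem proposition14:
  fixes M :: "'w measure"
    and T :: nat and \<rho> :: real
    and f :: "'x::euclidean_space \<Rightarrow> 'm::euclidean_space \<Rightarrow> 'x"
    and g :: "'x \<Rightarrow> 'y::euclidean_space \<Rightarrow> 'x"
    and Dg :: "'x \<Rightarrow> 'y \<Rightarrow> 'x \<Rightarrow>\<^sub>L 'x"
    and c :: "'x \<Rightarrow> 'm \<Rightarrow> real"
    and cx :: "'x \<Rightarrow> 'm \<Rightarrow> 'x"
    and K1 K2 K3 K4 K5 K6 K7 :: real and L1 L2 L3 :: nat
    and Y :: "nat \<Rightarrow> 'w \<Rightarrow> 'y"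
    and x0 :: 'x and \<tau> :: real and v :: 'm and u :: "real \<Rightarrow> 'm"
  assumes T_pos: "T \<ge> 1" and rho_pos: "0 < \<rho>"
    \<comment> \<open>f continuously differentiable and Lipschitz on R^nx x B(0,rho)\<close>
    and f_C1: "\<exists>f'. (\<forall>z. ((\<lambda>(x, w). f x w) has_derivative blinfun_apply (f' z)) (at z))
                    \<and> continuous_on UNIV f'"
    and K1: "K1 \<ge> 1"
    and f_lip: "\<And>x' x'' u' u''. norm u' \<le> \<rho> \<Longrightarrow> norm u'' \<le> \<rho> \<Longrightarrow>
                  norm (f x' u' - f x'' u'') \<le> K1 * (norm (x' - x'') + norm (u' - u''))"
    \<comment> \<open>g continuous, differentiable in x, polynomial growth bounds\<close>
    and g_cont: "continuous_on UNIV (\<lambda>(x, y). g x y)"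
    and g_deriv: "\<And>x y. ((\<lambda>x. g x y) has_derivative blinfun_apply (Dg x y)) (at x)"
    and K25: "K2 \<ge> 0" "K3 \<ge> 0" "K4 \<ge> 0" "K5 \<ge> 0" and L12: "L1 \<ge> 1" "L2 \<ge> 1"
    and g_bound: "\<And>x y. norm (g x y) \<le> K2 + K3 * norm x ^ L1 + K4 * norm y ^ L2
                                      + K5 * norm x ^ L1 * norm y ^ L2"
    and Dg_bound: "\<And>x y. norm (Dg x y) \<le> K2 + K3 * norm x ^ L1 + K4 * norm y ^ L2
                                      + K5 * norm x ^ L1 * norm y ^ L2"
    \<comment> \<open>c continuous, continuously differentiable in x (gradient cx), growth bounds\<close>
    and c_cont: "continuous_on UNIV (\<lambda>(x, w). c x w)"
    and c_deriv: "\<And>x w. ((\<lambda>x. c x w) has_derivative (\<lambda>h. cx x w \<bullet> h)) (at x)"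
    and cx_cont: "continuous_on UNIV (\<lambda>(x, w). cx x w)"
    and K67: "K6 \<ge> 0" "K7 \<ge> 0" and L3: "L3 \<ge> 1"
    and c_bound: "\<And>x w. norm w \<le> \<rho> \<Longrightarrow> \<bar>c x w\<bar> \<le> K6 + K7 * norm x ^ L3"
    and cx_bound: "\<And>x w. norm w \<le> \<rho> \<Longrightarrow> norm (cx x w) \<le> K6 + K7 * norm x ^ L3"
    \<comment> \<open>probability space and observations with all moments finite\<close>
    and M: "prob_space M"
    and Y_meas: "\<And>i. i \<in> {1..T} \<Longrightarrow> Y i \<in> borel_measurable M"
    and Y_mom: "\<And>i k. i \<in> {1..T} \<Longrightarrow> integrable M (\<lambda>\<omega>. norm (Y i \<omega>) ^ k)"
    \<comment> \<open>perturbation data\<close>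
    and tau: "0 < \<tau>" "\<tau> < 1"
    and v: "norm v \<le> \<rho>"
    and u: "u \<in> admissible_controls T \<rho>"
    and u_left: "continuous (at_left \<tau>) u"
  shows "((\<lambda>\<epsilon>. integral\<^sup>L M (\<lambda>\<omega>.
            integral {\<tau>..real T} (\<lambda>t. c (hyb_traj f g T (needle u \<tau> v \<epsilon>) (\<lambda>i. Y i \<omega>) x0 t)
                                        (needle u \<tau> v \<epsilon> t))))
          has_real_derivative
           integral\<^sup>L M (\<lambda>\<omega>.
            integral {\<tau>..real T} (\<lambda>t.
              cx (hyb_traj f g T u (\<lambda>i. Y i \<omega>) x0 t) (u t) \<bullet>
              Lim (at_right 0) (\<lambda>\<epsilon>. (hyb_traj f g T (needle u \<tau> v \<epsilon>) (\<lambda>i. Y i \<omega>) x0 t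
                                      - hyb_traj f g T u (\<lambda>i. Y i \<omega>) x0 t) /\<^sub>R \<epsilon>))))
         (at 0 within {0..\<tau>})"
proof -
  obtain f' where f_derivative: "\<And>z. ((\<lambda>(x, w). f x w) has_derivative blinfun_apply (f' z)) (at z)"
    and continuous_f': "continuous_on UNIV f'"
    using f_C1 by blast
  have "continuous_on UNIV (\<lambda>(x, w). f x w)"
    by (rule continuous_at_imp_continuous_on) (auto intro: has_derivative_continuous f_derivative)
  then interpret lipschitz_control_system f \<rho> K1
    by unfold_locales (use K1 rho_pos f_lip in auto)
  interpret hybrid_cost_system f \<rho> K1 f' g Dg T \<tau> v u x0 K2 K3 K4 K5 L1 L2 c cx K6 K7 L3
    using admissible_on_admissible_controls[OF u] f_derivative continuous_f'
    by unfold_locales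
       (use T_pos tau v u_left g_cont g_deriv K25 g_bound Dg_bound c_cont c_deriv K67 c_bound cx_bound
         in \<open>auto simp: poly_growth_def\<close>)
  from expected_cost_has_derivative[OF M Y_meas Y_mom]
  show ?thesis unfolding cost_def cost_variation_def needle_zero .
qed

end
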